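(* Let $P$ be a positive integer, $N=2^L$ with $L$ a positive integer, $D_1,\ldots,D_{N^P},R$ positive integers, let $\mathcal{W}^P_{\mathrm{TN}}\in\mathbb{R}^{D_1\times\cdots\times D_{N^P}}$ be generated by the $P$-dimensional locally connected tensor network of width $R$, and let $\mu:[N]^P\to[N^P]$ be compatible. For any $\mathcal{A}\in\mathbb{R}^{D_1\times\cdots\times D_{N^P}}$ and $\epsilon\in[0,\|\mathcal{A}\|/4]$, if $\|\mathcal{W}^P_{\mathrm{TN}}-\mathcal{A}\|\le\epsilon$, then for all canonical partitions $(\mathcal{K},\mathcal{K}^c)\in\mathcal{C}^P_N$: $$\mathrm{QE}(\mathcal{A};\mu(\mathcal{K}))\le\ln(R)+\frac{2\epsilon}{\|\mathcal{A}\|}\ln(D_{\mu(\mathcal{K})})+2\sqrt{\frac{2\epsilon}{\|\mathcal{A}\|}}.$$ In contrast, there exists $\mathcal{A}'\in\mathbb{R}^{D_1\times\cdots\times D_{N^P}}$ such that for all $(\mathcal{K},\mathcal{K}^c)\in\mathcal{C}^P_N$: $\mathrm{QE}(\mathcal{A}';\mu(\mathcal{K}))\ge\min\{|\mathcal{K}|,|\mathcal{K}^c|\}\cdot\ln(\min_{n\in[N^P]}D_n)$.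
   Context: Norms are Frobenius. For a tensor $\mathcal{A}\in\mathbb{R}^{D_1\times\cdots\times D_{N^P}}$ and $\mathcal{J}\subseteq[N^P]$, $[\![\mathcal{A};\mathcal{J}]\!]$ is its matrix arrangement with rows indexed by axes $\mathcal{J}$ and columns by the remaining axes $\mathcal{J}^c$; $D_{\mathcal{J}}:=\min\{\prod_{n\in\mathcal{J}}D_n,\prod_{n\in\mathcal{J}^c}D_n\}$; $\mathrm{QE}(\mathcal{A};\mathcal{J}):=-\sum_d\rho_d\ln\rho_d$ with $\rho_d=\sigma_d^2/\sum_{d'}\sigma_{d'}^2$ over the singular values of $[\![\mathcal{A};\mathcal{J}]\!]$ ($\mathrm{QE}(0;\mathcal{J})=0$; $\epsilon/\|\mathcal{A}\|:=0$ if $\mathcal{A}=0$). The $P$-dimensional locally connected tensor network of width $R$ has as graph a perfect $2^P$-ary tree of height $L$ with $N^P$ leaves, open edge of leaf $n$ (left to right) of dimension $D_n$, inner edges of dimension $R$; it generates exactly the tensors: choose $\phi^{(0,n)}_r\in\mathbb{R}^{D_n}$ ($n\in[N^P]$, $r\in[R]$); for $l=1,\ldots,L-1$, $n\in[2^{P(L-l)}]$, $r\in[R]$ set $\phi^{(l,n)}_r=\sum_{i_1,\ldots,i_{2^P}\in[R]}a^{(l,n)}_{r,i_1,\ldots,i_{2^P}}\bigotimes_{k=1}^{2^P}\phi^{(l-1,2^P(n-1)+k)}_{i_k}$; and $\mathcal{W}^P_{\mathrm{TN}}=\sum_{i_1,\ldots,i_{2^P}}a_{i_1,\ldots,i_{2^P}}\bigotimes_{k=1}^{2^P}\phi^{(L-1,k)}_{i_k}$.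 Thus the axes descending from the $n$-th node at level $l$ form the contiguous index block $\{2^{Pl}(n-1)+1,\ldots,2^{Pl}n\}$. A bijection $\mu:[N]^P\to[N^P]$ is compatible if for every node, the set $\mu^{-1}$ of the axis indices descending from it is a contiguous cubic block of $[N]^P$ of the form $\times_{p=1}^P\{s(k_p-1)+1,\ldots,sk_p\}$; for $\mathcal{K}\subseteq[N]^P$, $\mu(\mathcal{K}):=\{\mu(\mathbf{n}):\mathbf{n}\in\mathcal{K}\}$. The canonical partitions $\mathcal{C}^P_N$ of $[N]^P$ are the pairs $(\mathcal{K},[N]^P\setminus\mathcal{K})$ with $\mathcal{K}=\times_{p=1}^P\{2^{L-l}(n_p-1)+1,\ldots,2^{L-l}n_p\}$ for $l\in\{0,\ldots,L\}$, $n_1,\ldots,n_P\in[2^l]$. *)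

theory Defs
  imports Complex_Main "HOL-Library.FuncSet"
begin

text \<open>Tensor axes are numbered 1..M (M = N^P). An entry index of a tensor
is a function i :: nat => nat with i n < D n for axes n, and i n = 0 off the axes.
A tensor is a function from such index functions to reals (only its values on
the index set matter).\<close>

definition tidx :: "(nat \<Rightarrow> nat) \<Rightarrow> nat set \<Rightarrow> (nat \<Rightarrow> nat) set" where
  "tidx D S = {i. (\<forall>n\<in>S. i n < D n) \<and> (\<forall>n. n \<notin> S \<longrightarrow> i n = 0)}"

definition fnorm :: "(nat \<Rightarrow> nat) \<Rightarrow> nat \<Rightarrow> ((nat \<Rightarrow> nat) \<Rightarrow> real) \<Rightarrow> real" where
  "fnorm D M A = sqrt (\<Sum>i\<in>tidx D {1..M}. (A i)\<^sup>2)"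

text \<open>Matrix arrangement [[A; J]]: rows indexed by tidx D J, columns by tidx D ({1..M} - J).\<close>
definition matricize :: "((nat \<Rightarrow> nat) \<Rightarrow> real) \<Rightarrow> nat set \<Rightarrow> (nat \<Rightarrow> nat) \<Rightarrow> (nat \<Rightarrow> nat) \<Rightarrow> real" where
  "matricize A J r c = A (\<lambda>n. if n \<in> J then r n else c n)"

definition is_svd :: "'r set \<Rightarrow> 'c set \<Rightarrow> ('r \<Rightarrow> 'c \<Rightarrow> real) \<Rightarrow> nat \<Rightarrow> (nat \<Rightarrow> real)
    \<Rightarrow> (nat \<Rightarrow> 'r \<Rightarrow> real) \<Rightarrow> (nat \<Rightarrow> 'c \<Rightarrow> real) \<Rightarrow> bool" where
  "is_svd Rw Cl X k \<sigma> u v \<longleftrightarrow>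
     (\<forall>d<k. \<sigma> d \<ge> 0) \<and>
     (\<forall>d<k. \<forall>e<k. (\<Sum>r\<in>Rw. u d r * u e r) = (if d = e then 1 else 0)) \<and>
     (\<forall>d<k. \<forall>e<k. (\<Sum>c\<in>Cl. v d c * v e c) = (if d = e then 1 else 0)) \<and>
     (\<forall>r\<in>Rw. \<forall>c\<in>Cl. X r c = (\<Sum>d<k. \<sigma> d * u d r * v d c))"

text \<open>Entropy of the normalized squared singular values (0 ln 0 := 0; if all are 0 the
normalization gives 0, so the entropy is 0).\<close>
definition sv_entropy :: "nat \<Rightarrow> (nat \<Rightarrow> real) \<Rightarrow> real" where
  "sv_entropy k \<sigma> = - (\<Sum>d<k. let \<rho> = (\<sigma> d)\<^sup>2 / (\<Sum>e<k. (\<sigma> e)\<^sup>2) in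
                              if \<rho> = 0 then 0 else \<rho> * ln \<rho>)"

text \<open>Quantum entanglement QE(A; J) for a tensor with axes 1..M, computed from the singular
values of [[A; J]] (independent of the chosen SVD).\<close>
definition QE :: "(nat \<Rightarrow> nat) \<Rightarrow> nat \<Rightarrow> ((nat \<Rightarrow> nat) \<Rightarrow> real) \<Rightarrow> nat set \<Rightarrow> real" where
  "QE D M A J = (SOME e. \<exists>k \<sigma> u v.
      is_svd (tidx D J) (tidx D ({1..M} - J)) (matricize A J) k \<sigma> u v \<and> e = sv_entropy k \<sigma>)"

definition DJ :: "(nat \<Rightarrow> nat) \<Rightarrow> nat \<Rightarrow> nat set \<Rightarrow> nat" where
  "DJ D M J = min (\<Prod>n\<in>J. D n) (\<Prod>n\<in>{1..M} - J. D n)"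

text \<open>Locally connected tensor network. phi0 n r j is the j-th entry of phi^(0,n)_r;
a l n r ik is a^(l,n)_{r,i_1,...,i_{2^P}} with ik k = i_k; atop ik is the top coefficient.\<close>
primrec tn_phi :: "nat \<Rightarrow> nat \<Rightarrow> (nat \<Rightarrow> nat \<Rightarrow> nat \<Rightarrow> real) \<Rightarrow> (nat \<Rightarrow> nat \<Rightarrow> nat \<Rightarrow> (nat \<Rightarrow> nat) \<Rightarrow> real)
    \<Rightarrow> nat \<Rightarrow> nat \<Rightarrow> nat \<Rightarrow> (nat \<Rightarrow> nat) \<Rightarrow> real" where
  "tn_phi P R phi0 a 0 n r idx = phi0 n r (idx n)"
| "tn_phi P R phi0 a (Suc l) n r idx =
     (\<Sum>ik\<in>PiE {1..2^P} (\<lambda>_. {1..R}).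
        a (Suc l) n r ik * (\<Prod>k\<in>{1..2^P}. tn_phi P R phi0 a l (2^P * (n - 1) + k) (ik k) idx))"

definition tn_tensor :: "nat \<Rightarrow> nat \<Rightarrow> nat \<Rightarrow> (nat \<Rightarrow> nat \<Rightarrow> nat \<Rightarrow> real)
    \<Rightarrow> (nat \<Rightarrow> nat \<Rightarrow> nat \<Rightarrow> (nat \<Rightarrow> nat) \<Rightarrow> real) \<Rightarrow> ((nat \<Rightarrow> nat) \<Rightarrow> real) \<Rightarrow> (nat \<Rightarrow> nat) \<Rightarrow> real" where
  "tn_tensor P L R phi0 a atop idx =
     (\<Sum>ik\<in>PiE {1..2^P} (\<lambda>_. {1..R}).
        atop ik * (\<Prod>k\<in>{1..2^P}. tn_phi P R phi0 a (L - 1) k (ik k) idx))"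

definition tn_generated :: "nat \<Rightarrow> nat \<Rightarrow> nat \<Rightarrow> (nat \<Rightarrow> nat) \<Rightarrow> ((nat \<Rightarrow> nat) \<Rightarrow> real) \<Rightarrow> bool" where
  "tn_generated P L R D W \<longleftrightarrow> (\<exists>phi0 a atop. \<forall>idx\<in>tidx D {1..(2^L)^P}.
      W idx = tn_tensor P L R phi0 a atop idx)"

definition cube :: "nat \<Rightarrow> nat \<Rightarrow> (nat \<Rightarrow> nat) set" where
  "cube N P = PiE {1..P} (\<lambda>_. {1..N})"

definition cubic_block :: "nat \<Rightarrow> nat \<Rightarrow> (nat \<Rightarrow> nat) \<Rightarrow> (nat \<Rightarrow> nat) set" where
  "cubic_block P s k = PiE {1..P} (\<lambda>p. {s * (k p - 1) + 1 .. s * k p})"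

definition compatible :: "nat \<Rightarrow> nat \<Rightarrow> ((nat \<Rightarrow> nat) \<Rightarrow> nat) \<Rightarrow> bool" where
  "compatible P L \<mu> \<longleftrightarrow> bij_betw \<mu> (cube (2^L) P) {1..(2^L)^P} \<and>
     (\<forall>l\<in>{0..L}. \<forall>n\<in>{1..2^(P*(L-l))}. \<exists>s k.
        {x\<in>cube (2^L) P. \<mu> x \<in> {2^(P*l) * (n - 1) + 1 .. 2^(P*l) * n}} = cubic_block P s k)"

definition canon_K :: "nat \<Rightarrow> nat \<Rightarrow> nat \<Rightarrow> (nat \<Rightarrow> nat) \<Rightarrow> (nat \<Rightarrow> nat) set" where
  "canon_K P L l n = PiE {1..P} (\<lambda>p. {2^(L-l) * (n p - 1) + 1 .. 2^(L-l) * n p})"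

end

theory Submission
  imports Defs "HOL-Analysis.Analysis"
begin

text \<open>
  Compatibility maps each canonical cube K onto the axes below a single node of the tree.
  The vectors attached to that node depend only on these axes and every other factor of the network
  depends only on the remaining ones, so the matricization of W along \<mu>(K) has rank at most R.
  If A is \<epsilon>-close to W, all but a fraction (\<epsilon>/\<parallel>A\<parallel>)^2 of the squared singular values of A are
  captured by the R-dimensional row space of W (an Eckart-Young type estimate), and the log-sum
  inequality turns this into the stated entropy bound.

  Pair every axis with the axis half the range away, and let A' identify paired axes
  through a maximally entangled state of dimension d = min D. Each canonical block other than the
  full one lies in one half, so across \<mu>(K) the matricization of A' is a 0/1 matrix with d^|K|
  nonzero rows of equal sum and column sums at most 1. The Schur test bounds every squared singular
  value by that row sum, which forces the entropy to be at least |K| ln d.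

  Singular value decompositions of finite matrices, needed to make QE meaningful, are constructed by
  repeatedly maximizing the bilinear form of the residual over pairs of unit vectors.
\<close>

section \<open>Orthonormal families\<close>

definition orthonormal_on :: "'a set \<Rightarrow> nat \<Rightarrow> (nat \<Rightarrow> 'a \<Rightarrow> real) \<Rightarrow> bool" where
  "orthonormal_on S k u \<longleftrightarrow> (\<forall>d<k. \<forall>e<k. (\<Sum>r\<in>S. u d r * u e r) = (if d = e then 1 else 0))"

lemma sum_mult_combination_swap:
  fixes x :: "'a \<Rightarrow> real"
  shows "(\<Sum>r\<in>S. x r * (\<Sum>d<m. a d * e d r)) = (\<Sum>d<m. a d * (\<Sum>r\<in>S. x r * e d r))"
  by (simp add: sum_distrib_left sum.swap[of _ S] algebra_simps)

lemma orthonormal_on_sum_combinations: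
  assumes "orthonormal_on S m e"
  shows "(\<Sum>r\<in>S. (\<Sum>d<m. a d * e d r) * (\<Sum>d<m. b d * e d r)) = (\<Sum>d<m. a d * b d)"
proof -
  have "(\<Sum>r\<in>S. (\<Sum>d<m. a d * e d r) * (\<Sum>d<m. b d * e d r))
      = (\<Sum>r\<in>S. \<Sum>d<m. \<Sum>d'<m. a d * b d' * (e d r * e d' r))"
    by (simp add: sum_product algebra_simps)
  also have "\<dots> = (\<Sum>d<m. \<Sum>d'<m. a d * b d' * (\<Sum>r\<in>S. e d r * e d' r))"
    by (simp add: sum_distrib_left sum.swap[of _ S])
  also have "\<dots> = (\<Sum>d<m. \<Sum>d'<m. a d * b d' * (if d = d' then 1 else 0))"
    using assms unfolding orthonormal_on_def by (intro sum.cong refl) auto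
  also have "\<dots> = (\<Sum>d<m. a d * b d)"
    by (simp add: if_distrib cong: if_cong)
  finally show ?thesis .
qed

lemma bessel_inequality:
  assumes "orthonormal_on S m e" "finite S"
  shows "(\<Sum>d<m. (\<Sum>r\<in>S. x r * e d r)\<^sup>2) \<le> (\<Sum>r\<in>S. (x r)\<^sup>2)"
proof -
  define a where "a d = (\<Sum>r\<in>S. x r * e d r)" for d
  have "0 \<le> (\<Sum>r\<in>S. (x r - (\<Sum>d<m. a d * e d r))\<^sup>2)"
    by (intro sum_nonneg) auto
  also have "\<dots> = (\<Sum>r\<in>S. (x r)\<^sup>2) - 2 * (\<Sum>r\<in>S. x r * (\<Sum>d<m. a d * e d r))
        + (\<Sum>r\<in>S. (\<Sum>d<m. a d * e d r) * (\<Sum>d<m. a d * e d r))"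
    by (simp add: power2_eq_square algebra_simps sum_subtractf sum.distrib sum_distrib_left)
  also have "\<dots> = (\<Sum>r\<in>S. (x r)\<^sup>2) - (\<Sum>d<m. (a d)\<^sup>2)"
    unfolding orthonormal_on_sum_combinations[OF assms(1)] sum_mult_combination_swap[where x = x and S = S]
    by (simp add: a_def power2_eq_square)
  finally show ?thesis by (simp add: a_def)
qed

lemma orthonormal_on_card_le:
  assumes "orthonormal_on S k u" "finite S"
  shows "k \<le> card S"
proof -
  have "real k = (\<Sum>d<k. \<Sum>r\<in>S. (u d r)\<^sup>2)"
    using assms(1) unfolding orthonormal_on_def by (simp add: power2_eq_square)
  also have "\<dots> = (\<Sum>r\<in>S. \<Sum>d<k. (\<Sum>r'\<in>S. (if r' = r then 1 else 0) * u d r')\<^sup>2)"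
    using assms(2) by (subst sum.swap) (simp add: mult_delta_left)
  also have "\<dots> \<le> (\<Sum>r\<in>S. \<Sum>r'\<in>S. (if r' = r then 1 else 0::real)\<^sup>2)"
    by (intro sum_mono bessel_inequality assms)
  also have "\<dots> = real (card S)"
    using assms(2) by (simp add: if_distrib[of "\<lambda>t. t\<^sup>2"] cong: if_cong)
  finally show ?thesis by simp
qed

lemma orthonormal_on_extend:
  assumes "orthonormal_on S k u" "\<forall>d<k. (\<Sum>r\<in>S. u d r * w r) = 0" "(\<Sum>r\<in>S. w r * w r) = 1"
  shows "orthonormal_on S (Suc k) (u(k:=w))"
  using assms unfolding orthonormal_on_def
  by (auto simp: less_Suc_eq mult.commute)

definition in_span_on :: "'a set \<Rightarrow> nat \<Rightarrow> (nat \<Rightarrow> 'a \<Rightarrow> real) \<Rightarrow> ('a \<Rightarrow> real) \<Rightarrow> bool" where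
  "in_span_on S m e f \<longleftrightarrow> (\<exists>\<beta>. \<forall>x\<in>S. f x = (\<Sum>j<m. \<beta> j * e j x))"

lemma in_span_on_mono:
  assumes "in_span_on S m e f" "m \<le> m'" "\<forall>j<m. e' j = e j"
  shows "in_span_on S m' e' f"
proof -
  obtain \<beta> where \<beta>: "\<forall>x\<in>S. f x = (\<Sum>j<m. \<beta> j * e j x)"
    using assms(1) unfolding in_span_on_def by blast
  have "f x = (\<Sum>j<m'. (if j < m then \<beta> j else 0) * e' j x)" if "x \<in> S" for x
  proof -
    have "(\<Sum>j<m'. (if j < m then \<beta> j else 0) * e' j x) = (\<Sum>j<m. \<beta> j * e j x)"
      using assms(2,3) by (intro sum.mono_neutral_cong_right) auto
    then show ?thesis using \<beta> that by simp
  qed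
  then show ?thesis
    unfolding in_span_on_def by (intro exI[of _ "\<lambda>j. if j < m then \<beta> j else 0"]) blast
qed

lemma gram_schmidt_step:
  assumes fin: "finite S" and oe: "orthonormal_on S m e"
  shows "\<exists>m' e'. m \<le> m' \<and> m' \<le> Suc m \<and> (\<forall>j<m. e' j = e j) \<and>
           orthonormal_on S m' e' \<and> in_span_on S m' e' f"
proof -
  define a where "a j = (\<Sum>x\<in>S. f x * e j x)" for j
  define w where "w x = f x - (\<Sum>j<m. a j * e j x)" for x
  have f_eq: "f x = (\<Sum>j<m. a j * e j x) + w x" for x by (simp add: w_def)
  have ortw: "\<forall>j<m. (\<Sum>x\<in>S. e j x * w x) = 0"
  proof (intro allI impI)
    fix j assume j: "j < m"
    have "(\<Sum>x\<in>S. e j x * (\<Sum>j<m. a j * e j x)) = (\<Sum>j'<m. a j' * (\<Sum>x\<in>S. e j x * e j' x))"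
      by (rule sum_mult_combination_swap)
    also have "\<dots> = (\<Sum>j'<m. a j' * (if j = j' then 1 else 0))"
      using oe j unfolding orthonormal_on_def by (intro sum.cong) auto
    also have "\<dots> = a j" using j by (simp add: if_distrib cong: if_cong)
    finally show "(\<Sum>x\<in>S. e j x * w x) = 0"
      by (simp add: w_def a_def algebra_simps sum_subtractf)
  qed
  show ?thesis
  proof (cases "(\<Sum>x\<in>S. (w x)\<^sup>2) = 0")
    case True
    then have "\<forall>x\<in>S. w x = 0" using fin by (subst (asm) sum_nonneg_eq_0_iff) auto
    then have "in_span_on S m e f" unfolding in_span_on_def using f_eq by auto
    then show ?thesis using oe by (intro exI[of _ m] exI[of _ e]) auto
  next
    case False
    define nr where "nr = sqrt (\<Sum>x\<in>S. (w x)\<^sup>2)"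
    have nr: "nr > 0" "nr * nr = (\<Sum>x\<in>S. (w x)\<^sup>2)"
      using False by (auto simp: nr_def sum_nonneg order_less_le)
    define e' where "e' = e(m := (\<lambda>x. w x / nr))"
    have "orthonormal_on S (Suc m) e'"
      unfolding e'_def
    proof (rule orthonormal_on_extend[OF oe])
      show "\<forall>d<m. (\<Sum>r\<in>S. e d r * (w r / nr)) = 0" using ortw by (simp add: sum_divide_distrib[symmetric])
      show "(\<Sum>r\<in>S. w r / nr * (w r / nr)) = 1"
        using nr False by (simp add: sum_divide_distrib[symmetric] power2_eq_square)
    qed
    moreover have "f x = (\<Sum>j<Suc m. (a(m := nr)) j * e' j x)" for x
      using nr f_eq[of x] by (simp add: e'_def)
    ultimately show ?thesis unfolding in_span_on_def
      by (intro exI[of _ "Suc m"] exI[of _ e'] conjI exI[of _ "a(m := nr)"]) (auto simp: e'_def)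
  qed
qed

lemma gram_schmidt_span:
  assumes "finite S"
  shows "\<exists>m e. m \<le> n \<and> orthonormal_on S m e \<and> (\<forall>i<n. in_span_on S m e (f i))"
proof (induction n)
  case 0
  show ?case by (intro exI[of _ 0]) (auto simp: orthonormal_on_def)
next
  case (Suc n)
  then obtain m e where m: "m \<le> n" and oe: "orthonormal_on S m e" and sp: "\<forall>i<n. in_span_on S m e (f i)"
    by blast
  obtain m' e' where "m \<le> m'" "m' \<le> Suc m" "\<forall>j<m. e' j = e j" "orthonormal_on S m' e'"
    "in_span_on S m' e' (f n)"
    using gram_schmidt_step[OF assms oe] by blast
  moreover have "\<forall>i<n. in_span_on S m' e' (f i)"
    using sp in_span_on_mono[of S m e _ m' e'] \<open>m \<le> m'\<close> \<open>\<forall>j<m. e' j = e j\<close> by blast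
  ultimately show ?case using m by (intro exI[of _ m'] exI[of _ e']) (auto simp: less_Suc_eq)
qed

lemma sum_sq_diff_span_ge:
  assumes "orthonormal_on S m e" "finite S"
  shows "(\<Sum>r\<in>S. (x r - (\<Sum>j<m. h j * e j r))\<^sup>2) \<ge> (\<Sum>r\<in>S. (x r)\<^sup>2) - (\<Sum>j<m. (\<Sum>r\<in>S. x r * e j r)\<^sup>2)"
proof -
  define a where "a j = (\<Sum>r\<in>S. x r * e j r)" for j
  have "(\<Sum>r\<in>S. (x r - (\<Sum>j<m. h j * e j r))\<^sup>2) = (\<Sum>r\<in>S. (x r)\<^sup>2) - 2 * (\<Sum>r\<in>S. x r * (\<Sum>j<m. h j * e j r))
        + (\<Sum>r\<in>S. (\<Sum>j<m. h j * e j r) * (\<Sum>j<m. h j * e j r))"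
    by (simp add: power2_eq_square algebra_simps sum_subtractf sum.distrib sum_distrib_left)
  also have "\<dots> = (\<Sum>r\<in>S. (x r)\<^sup>2) - 2 * (\<Sum>j<m. h j * a j) + (\<Sum>j<m. h j * h j)"
    unfolding orthonormal_on_sum_combinations[OF assms(1)] sum_mult_combination_swap[where x = x and S = S] a_def by simp
  also have "\<dots> = (\<Sum>r\<in>S. (x r)\<^sup>2) - (\<Sum>j<m. (a j)\<^sup>2) + (\<Sum>j<m. (h j - a j)\<^sup>2)"
    by (simp add: power2_eq_square algebra_simps sum_subtractf sum.distrib sum_distrib_left)
  also have "\<dots> \<ge> (\<Sum>r\<in>S. (x r)\<^sup>2) - (\<Sum>j<m. (a j)\<^sup>2)"
    by (simp add: sum_nonneg)
  finally show ?thesis by (simp add: a_def)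
qed

section \<open>Existence of singular value decompositions\<close>

lemma is_svd_iff:
  "is_svd Rw Cl X k \<sigma> u v \<longleftrightarrow> (\<forall>d<k. \<sigma> d \<ge> 0) \<and> orthonormal_on Rw k u \<and> orthonormal_on Cl k v \<and>
     (\<forall>r\<in>Rw. \<forall>c\<in>Cl. X r c = (\<Sum>d<k. \<sigma> d * u d r * v d c))"
  by (simp add: is_svd_def orthonormal_on_def)

definition unit_sphere_on :: "'a set \<Rightarrow> ('a \<Rightarrow> real) set" where
  "unit_sphere_on S = {u. (\<forall>x. x \<notin> S \<longrightarrow> u x = 0) \<and> (\<Sum>x\<in>S. (u x)\<^sup>2) = 1}"

lemma closed_unit_sphere_on: "finite S \<Longrightarrow> closed (unit_sphere_on S)"
proof -
  assume fin: "finite S"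
  have "unit_sphere_on S = (\<Inter>x\<in>-S. {u. u x = 0}) \<inter> {u. (\<Sum>x\<in>S. (u x)\<^sup>2) = 1}"
    by (auto simp: unit_sphere_on_def)
  moreover have "closed {u::'a\<Rightarrow>real. u x = 0}" for x
    by (rule closed_Collect_eq) (auto intro: continuous_on_product_coordinates)
  moreover have "closed {u::'a\<Rightarrow>real. (\<Sum>x\<in>S. (u x)\<^sup>2) = 1}"
    by (rule closed_Collect_eq) (auto intro!: continuous_intros continuous_on_product_coordinates)
  ultimately show ?thesis by (metis closed_INT closed_Int)
qed

lemma compact_unit_sphere_on:
  assumes "finite S" shows "compact (unit_sphere_on S)"
proof -
  define box where "box = PiE UNIV (\<lambda>x. if x \<in> S then {-1..1::real} else {0})"
  have "compactin (product_topology (\<lambda>i. euclidean) UNIV) box"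
    unfolding box_def by (subst compactin_PiE) auto
  then have "compact box" by (simp add: euclidean_product_topology)
  moreover have "unit_sphere_on S \<subseteq> box"
  proof
    fix u assume u: "u \<in> unit_sphere_on S"
    have "(u x)\<^sup>2 \<le> 1" if "x \<in> S" for x
      using member_le_sum[of x S "\<lambda>y. (u y)\<^sup>2"] that assms u by (auto simp: unit_sphere_on_def)
    then show "u \<in> box"
      using u by (auto simp: box_def unit_sphere_on_def PiE_def abs_le_iff abs_square_le_1)
  qed
  ultimately show ?thesis
    using closed_unit_sphere_on[OF assms] by (metis compact_Int_closed inf.absorb_iff2)
qed

lemma point_mass_in_unit_sphere_on_iff:
  assumes "x \<in> S" "finite S"
  shows "(\<lambda>y. if y = x then c else 0) \<in> unit_sphere_on S \<longleftrightarrow> c\<^sup>2 = 1"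
  using assms by (auto simp: unit_sphere_on_def if_distrib[of "\<lambda>t. t\<^sup>2"] cong: if_cong)

lemma bilinear_form_attains_max:
  fixes Z :: "'r \<Rightarrow> 'c \<Rightarrow> real"
  assumes "finite Rw" "finite Cl" "Rw \<noteq> {}" "Cl \<noteq> {}"
  shows "\<exists>u\<in>unit_sphere_on Rw. \<exists>v\<in>unit_sphere_on Cl. \<forall>u'\<in>unit_sphere_on Rw. \<forall>v'\<in>unit_sphere_on Cl.
     (\<Sum>r\<in>Rw. u' r * (\<Sum>c\<in>Cl. Z r c * v' c)) \<le> (\<Sum>r\<in>Rw. u r * (\<Sum>c\<in>Cl. Z r c * v c))"
proof -
  have cpt: "compact (unit_sphere_on Rw \<times> unit_sphere_on Cl)"
    using compact_unit_sphere_on[OF assms(1)] compact_unit_sphere_on[OF assms(2)] by (rule compact_Times)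
  obtain x0 where "x0 \<in> Rw" using assms by auto
  obtain y0 where "y0 \<in> Cl" using assms by auto
  have ne: "unit_sphere_on Rw \<times> unit_sphere_on Cl \<noteq> {}"
    using point_mass_in_unit_sphere_on_iff[OF \<open>x0 \<in> Rw\<close> assms(1), of 1] point_mass_in_unit_sphere_on_iff[OF \<open>y0 \<in> Cl\<close> assms(2), of 1] by auto
  have cont: "continuous_on (unit_sphere_on Rw \<times> unit_sphere_on Cl)
      (\<lambda>p. (\<Sum>r\<in>Rw. fst p r * (\<Sum>c\<in>Cl. Z r c * snd p c)))"
  proof -
    have c1: "continuous_on UNIV (\<lambda>p::('r\<Rightarrow>real)\<times>('c\<Rightarrow>real). fst p r)" for r
      by (rule continuous_on_compose2[OF continuous_on_product_coordinates[of r] continuous_on_fst[OF continuous_on_id]]) auto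
    have c2: "continuous_on UNIV (\<lambda>p::('r\<Rightarrow>real)\<times>('c\<Rightarrow>real). snd p c)" for c
      by (rule continuous_on_compose2[OF continuous_on_product_coordinates[of c] continuous_on_snd[OF continuous_on_id]]) auto
    show ?thesis
      by (intro continuous_intros continuous_on_subset[OF c1] continuous_on_subset[OF c2]) auto
  qed
  from continuous_attains_sup[OF cpt ne cont] show ?thesis by auto
qed

lemma maximizer_parallel:
  assumes fin: "finite Rw" and u: "u \<in> unit_sphere_on Rw"
    and mx: "\<forall>u'\<in>unit_sphere_on Rw. (\<Sum>r\<in>Rw. u' r * w r) \<le> (\<Sum>r\<in>Rw. u r * w r)"
  shows "\<forall>r\<in>Rw. w r = (\<Sum>r\<in>Rw. u r * w r) * u r"
proof -
  \<comment> \<open>Testing the maximum at w/|w| gives s \<ge> |w|, hence |w - s u|^2 = |w|^2 - s^2 \<le> 0.\<close>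
  define s where "s = (\<Sum>r\<in>Rw. u r * w r)"
  define N2 where "N2 = (\<Sum>r\<in>Rw. (w r)\<^sup>2)"
  have N2ge: "N2 \<ge> 0" unfolding N2_def by (auto intro: sum_nonneg)
  have uu: "(\<Sum>r\<in>Rw. (u r)\<^sup>2) = 1" using u by (simp add: unit_sphere_on_def)
  have key: "N2 \<le> s\<^sup>2 \<and> 0 \<le> s"
  proof (cases "N2 = 0")
    case True
    have "\<forall>r\<in>Rw. (w r)\<^sup>2 = 0"
      using True fin unfolding N2_def by (subst (asm) sum_nonneg_eq_0_iff) auto
    then have "s = 0" unfolding s_def by simp
    then show ?thesis using True by simp
  next
    case False
    then have np: "N2 > 0" using N2ge by simp
    define n where "n = sqrt N2"
    have n: "n > 0" "n * n = N2" using np by (auto simp: n_def)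
    define u' where "u' r = (if r \<in> Rw then w r / n else 0)" for r
    have "(\<Sum>r\<in>Rw. (u' r)\<^sup>2) = (\<Sum>r\<in>Rw. (w r)\<^sup>2 / (n * n))"
      by (rule sum.cong) (auto simp: u'_def power2_eq_square)
    also have "\<dots> = 1" using n np by (simp add: N2_def sum_divide_distrib[symmetric])
    finally have "u' \<in> unit_sphere_on Rw" by (auto simp: unit_sphere_on_def u'_def)
    then have "(\<Sum>r\<in>Rw. u' r * w r) \<le> s" using mx s_def by auto
    moreover have "(\<Sum>r\<in>Rw. u' r * w r) = (\<Sum>r\<in>Rw. (w r)\<^sup>2 / n)"
      by (rule sum.cong) (auto simp: u'_def power2_eq_square)
    moreover have "\<dots> = N2 / n" by (simp add: N2_def sum_divide_distrib)
    moreover have "N2 / n = n" using n(1) n(2)[symmetric] by (simp add: field_simps)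
    ultimately have "n \<le> s" by simp
    then show ?thesis using n by (smt (verit) mult_mono power2_eq_square)
  qed
  have "(\<Sum>r\<in>Rw. (w r - s * u r)\<^sup>2) = N2 - 2 * s * (\<Sum>r\<in>Rw. u r * w r) + s\<^sup>2 * (\<Sum>r\<in>Rw. (u r)\<^sup>2)"
    by (simp add: N2_def power2_eq_square algebra_simps sum_subtractf sum.distrib sum_distrib_left)
  also have "\<dots> = N2 - 2 * s * s + s\<^sup>2 * (\<Sum>r\<in>Rw. (u r)\<^sup>2)" by (simp add: s_def)
  also have "\<dots> \<le> 0" using key uu by (simp add: power2_eq_square)
  finally have le0: "(\<Sum>r\<in>Rw. (w r - s * u r)\<^sup>2) \<le> 0" .
  have "(\<Sum>r\<in>Rw. (w r - s * u r)\<^sup>2) = 0"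
    using le0 by (intro order_antisym sum_nonneg) auto
  then have "\<forall>r\<in>Rw. (w r - s * u r)\<^sup>2 = 0"
    using fin by (subst (asm) sum_nonneg_eq_0_iff) auto
  then show ?thesis by (auto simp: s_def)
qed

lemma singular_vector_orthogonal:
  fixes Z :: "'r \<Rightarrow> 'c \<Rightarrow> real"
  assumes "s \<noteq> 0" and "\<forall>r\<in>Rw. (\<Sum>c\<in>Cl. Z r c * y c) = s * x r"
    and "\<forall>c\<in>Cl. (\<Sum>r\<in>Rw. Z r c * w r) = 0"
  shows "(\<Sum>r\<in>Rw. w r * x r) = 0"
proof -
  have "s * (\<Sum>r\<in>Rw. w r * x r) = (\<Sum>r\<in>Rw. w r * (\<Sum>c\<in>Cl. Z r c * y c))"
    using assms(2) by (simp add: sum_distrib_left algebra_simps)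
  also have "\<dots> = (\<Sum>c\<in>Cl. y c * (\<Sum>r\<in>Rw. Z r c * w r))"
    by (simp add: sum_distrib_left sum.swap[of _ Rw] algebra_simps)
  also have "\<dots> = 0" using assms(3) by simp
  finally show ?thesis using assms(1) by simp
qed

lemma deflation_orthogonal:
  fixes Z :: "'r \<Rightarrow> 'c \<Rightarrow> real"
  assumes Zx: "\<forall>c\<in>Cl. (\<Sum>r\<in>Rw. Z r c * x r) = s * y c" and x: "(\<Sum>r\<in>Rw. x r * x r) = 1"
    and Zu: "\<forall>d<k. \<forall>c\<in>Cl. (\<Sum>r\<in>Rw. Z r c * u d r) = 0" and xu: "\<forall>d<k. (\<Sum>r\<in>Rw. u d r * x r) = 0"
  shows "\<forall>d<Suc k. \<forall>c\<in>Cl. (\<Sum>r\<in>Rw. (Z r c - s * x r * y c) * (u(k:=x)) d r) = 0"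
proof (intro allI impI ballI)
  fix d c assume d: "d < Suc k" and c: "c \<in> Cl"
  have split: "(\<Sum>r\<in>Rw. (Z r c - s * x r * y c) * w r)
      = (\<Sum>r\<in>Rw. Z r c * w r) - s * y c * (\<Sum>r\<in>Rw. x r * w r)" for w
    by (simp add: algebra_simps sum_subtractf sum_distrib_left)
  show "(\<Sum>r\<in>Rw. (Z r c - s * x r * y c) * (u(k:=x)) d r) = 0"
  proof (cases "d = k")
    case True
    then show ?thesis using split[of x] Zx c x by simp
  next
    case False
    then show ?thesis using split[of "u d"] d Zu c xu by (simp add: mult.commute)
  qed
qed

lemma top_singular_pair:
  fixes Z :: "'r \<Rightarrow> 'c \<Rightarrow> real"
  assumes fin: "finite Rw" "finite Cl" and r0: "r0 \<in> Rw" and c0: "c0 \<in> Cl" and nz: "Z r0 c0 \<noteq> 0"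
  obtains s u' v' where "s > 0" "u' \<in> unit_sphere_on Rw" "v' \<in> unit_sphere_on Cl"
    "\<forall>r\<in>Rw. (\<Sum>c\<in>Cl. Z r c * v' c) = s * u' r"
    "\<forall>c\<in>Cl. (\<Sum>r\<in>Rw. Z r c * u' r) = s * v' c"
proof -
  obtain u' v' where u': "u' \<in> unit_sphere_on Rw" and v': "v' \<in> unit_sphere_on Cl" and
    mx: "\<forall>u''\<in>unit_sphere_on Rw. \<forall>v''\<in>unit_sphere_on Cl.
     (\<Sum>r\<in>Rw. u'' r * (\<Sum>c\<in>Cl. Z r c * v'' c)) \<le> (\<Sum>r\<in>Rw. u' r * (\<Sum>c\<in>Cl. Z r c * v' c))"
    using bilinear_form_attains_max[OF fin, of Z] r0 c0 by blast
  define s where "s = (\<Sum>r\<in>Rw. u' r * (\<Sum>c\<in>Cl. Z r c * v' c))"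
  have swap: "(\<Sum>r\<in>Rw. a r * (\<Sum>c\<in>Cl. Z r c * b c)) = (\<Sum>c\<in>Cl. b c * (\<Sum>r\<in>Rw. Z r c * a r))" for a b
    by (simp add: sum_distrib_left sum.swap[of _ Rw] algebra_simps)
  have roweq: "\<forall>r\<in>Rw. (\<Sum>c\<in>Cl. Z r c * v' c) = s * u' r"
    using maximizer_parallel[OF fin(1) u', of "\<lambda>r. \<Sum>c\<in>Cl. Z r c * v' c"] mx v' unfolding s_def by blast
  have coleq: "\<forall>c\<in>Cl. (\<Sum>r\<in>Rw. Z r c * u' r) = s * v' c"
  proof -
    have "\<forall>v''\<in>unit_sphere_on Cl. (\<Sum>c\<in>Cl. v'' c * (\<Sum>r\<in>Rw. Z r c * u' r)) \<le> (\<Sum>c\<in>Cl. v' c * (\<Sum>r\<in>Rw. Z r c * u' r))"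
      using mx u' by (simp add: swap[symmetric])
    from maximizer_parallel[OF fin(2) v' this] show ?thesis by (simp add: swap[symmetric] s_def)
  qed
  have spos: "s > 0"
  proof -
    define g where "g = sgn (Z r0 c0)"
    have g2: "g\<^sup>2 = 1" using nz by (auto simp: g_def sgn_if)
    have h1: "(\<lambda>y. if y = r0 then 1 else 0) \<in> unit_sphere_on Rw" using point_mass_in_unit_sphere_on_iff[OF r0 fin(1)] by simp
    have h2: "(\<lambda>y. if y = c0 then g else 0) \<in> unit_sphere_on Cl" using point_mass_in_unit_sphere_on_iff[OF c0 fin(2)] g2 by simp
    have "(\<Sum>r\<in>Rw. (if r = r0 then 1 else 0) * (\<Sum>c\<in>Cl. Z r c * (if c = c0 then g else 0))) \<le> s"
      using mx[rule_format, OF h1 h2] unfolding s_def .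
    also have "(\<Sum>r\<in>Rw. (if r = r0 then 1 else 0) * (\<Sum>c\<in>Cl. Z r c * (if c = c0 then g else 0))) = Z r0 c0 * g"
      using fin r0 c0 by (simp add: mult_delta_left mult_delta_right)
    finally show ?thesis using nz by (auto simp: g_def sgn_if split: if_splits)
  qed
  show thesis using that spos u' v' roweq coleq by blast
qed

lemma rank_one_deflation:
  fixes Z :: "'r \<Rightarrow> 'c \<Rightarrow> real"
  assumes fin: "finite Rw" "finite Cl" and ou: "orthonormal_on Rw k u" and ov: "orthonormal_on Cl k v"
    and zu: "\<forall>d<k. \<forall>c\<in>Cl. (\<Sum>r\<in>Rw. Z r c * u d r) = 0"
    and zv: "\<forall>d<k. \<forall>r\<in>Rw. (\<Sum>c\<in>Cl. Z r c * v d c) = 0"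
    and r0: "r0 \<in> Rw" and c0: "c0 \<in> Cl" and nz: "Z r0 c0 \<noteq> 0"
  shows "\<exists>s u' v'. s > 0 \<and> orthonormal_on Rw (Suc k) (u(k:=u')) \<and> orthonormal_on Cl (Suc k) (v(k:=v')) \<and>
     (\<forall>d<Suc k. \<forall>c\<in>Cl. (\<Sum>r\<in>Rw. (Z r c - s * u' r * v' c) * (u(k:=u')) d r) = 0) \<and>
     (\<forall>d<Suc k. \<forall>r\<in>Rw. (\<Sum>c\<in>Cl. (Z r c - s * u' r * v' c) * (v(k:=v')) d c) = 0)"
proof -
  obtain s u' v' where spos: "s > 0" and u': "u' \<in> unit_sphere_on Rw" and v': "v' \<in> unit_sphere_on Cl"
    and roweq: "\<forall>r\<in>Rw. (\<Sum>c\<in>Cl. Z r c * v' c) = s * u' r"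
    and coleq: "\<forall>c\<in>Cl. (\<Sum>r\<in>Rw. Z r c * u' r) = s * v' c"
    using top_singular_pair[of Rw Cl r0 c0 Z] fin r0 c0 nz by blast
  have uu: "(\<Sum>r\<in>Rw. u' r * u' r) = 1" using u' by (simp add: unit_sphere_on_def power2_eq_square)
  have vv: "(\<Sum>c\<in>Cl. v' c * v' c) = 1" using v' by (simp add: unit_sphere_on_def power2_eq_square)
  have ortu: "\<forall>d<k. (\<Sum>r\<in>Rw. u d r * u' r) = 0"
    using spos roweq zu by (intro allI impI singular_vector_orthogonal[where Z = Z]) auto
  have ortv: "\<forall>d<k. (\<Sum>c\<in>Cl. v d c * v' c) = 0"
    using spos coleq zv by (intro allI impI singular_vector_orthogonal[where Z = "\<lambda>c r. Z r c"]) auto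
  have deflated_v: "\<forall>d<Suc k. \<forall>r\<in>Rw. (\<Sum>c\<in>Cl. (Z r c - s * u' r * v' c) * (v(k:=v')) d c) = 0"
    using deflation_orthogonal[where Z = "\<lambda>c r. Z r c" and x = v' and y = u' and u = v, OF _ vv] roweq zv ortv by (simp add: mult_ac)
  show ?thesis
    using spos orthonormal_on_extend[OF ou ortu uu] orthonormal_on_extend[OF ov ortv vv]
      deflation_orthogonal[OF coleq uu zu ortu] deflated_v by blast
qed

definition svd_residual :: "('r \<Rightarrow> 'c \<Rightarrow> real) \<Rightarrow> nat \<Rightarrow> (nat \<Rightarrow> real) \<Rightarrow> (nat \<Rightarrow> 'r \<Rightarrow> real)
    \<Rightarrow> (nat \<Rightarrow> 'c \<Rightarrow> real) \<Rightarrow> 'r \<Rightarrow> 'c \<Rightarrow> real" where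
  "svd_residual X k \<sigma> u v r c = X r c - (\<Sum>d<k. \<sigma> d * u d r * v d c)"

definition partial_svd :: "'r set \<Rightarrow> 'c set \<Rightarrow> ('r \<Rightarrow> 'c \<Rightarrow> real) \<Rightarrow> nat \<Rightarrow> (nat \<Rightarrow> real)
    \<Rightarrow> (nat \<Rightarrow> 'r \<Rightarrow> real) \<Rightarrow> (nat \<Rightarrow> 'c \<Rightarrow> real) \<Rightarrow> bool" where
  "partial_svd Rw Cl X k \<sigma> u v \<longleftrightarrow> (\<forall>d<k. \<sigma> d \<ge> 0) \<and> orthonormal_on Rw k u \<and> orthonormal_on Cl k v \<and>
     (\<forall>d<k. \<forall>c\<in>Cl. (\<Sum>r\<in>Rw. svd_residual X k \<sigma> u v r c * u d r) = 0) \<and>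
     (\<forall>d<k. \<forall>r\<in>Rw. (\<Sum>c\<in>Cl. svd_residual X k \<sigma> u v r c * v d c) = 0)"

lemma partial_svd_extend:
  assumes fin: "finite Rw" "finite Cl" and inv: "partial_svd Rw Cl X k \<sigma> u v"
    and nz: "r0 \<in> Rw" "c0 \<in> Cl" "svd_residual X k \<sigma> u v r0 c0 \<noteq> 0"
  shows "\<exists>\<sigma>' u' v'. partial_svd Rw Cl X (Suc k) \<sigma>' u' v'"
proof -
  obtain s u' v' where s: "s > 0" and o1: "orthonormal_on Rw (Suc k) (u(k:=u'))" and o2: "orthonormal_on Cl (Suc k) (v(k:=v'))"
    and I1: "\<forall>d<Suc k. \<forall>c\<in>Cl. (\<Sum>r\<in>Rw. (svd_residual X k \<sigma> u v r c - s * u' r * v' c) * (u(k:=u')) d r) = 0"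
    and I2: "\<forall>d<Suc k. \<forall>r\<in>Rw. (\<Sum>c\<in>Cl. (svd_residual X k \<sigma> u v r c - s * u' r * v' c) * (v(k:=v')) d c) = 0"
  proof -
    have ou: "orthonormal_on Rw k u" and ov: "orthonormal_on Cl k v"
      and zu: "\<forall>d<k. \<forall>c\<in>Cl. (\<Sum>r\<in>Rw. svd_residual X k \<sigma> u v r c * u d r) = 0"
      and zv: "\<forall>d<k. \<forall>r\<in>Rw. (\<Sum>c\<in>Cl. svd_residual X k \<sigma> u v r c * v d c) = 0"
      using inv unfolding partial_svd_def by blast+
    from rank_one_deflation[OF fin ou ov zu zv nz] show ?thesis using that by blast
  qed
  have re: "svd_residual X (Suc k) (\<sigma>(k:=s)) (u(k:=u')) (v(k:=v')) r c = svd_residual X k \<sigma> u v r c - s * u' r * v' c" for r c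
  proof -
    have "(\<Sum>d<k. (\<sigma>(k:=s)) d * (u(k:=u')) d r * (v(k:=v')) d c) = (\<Sum>d<k. \<sigma> d * u d r * v d c)"
      by (rule sum.cong) auto
    then show ?thesis unfolding svd_residual_def by (simp add: algebra_simps)
  qed
  have sg: "\<forall>d<Suc k. (\<sigma>(k:=s)) d \<ge> 0" using inv s unfolding partial_svd_def by (simp add: less_Suc_eq)
  have "partial_svd Rw Cl X (Suc k) (\<sigma>(k:=s)) (u(k:=u')) (v(k:=v'))"
    unfolding partial_svd_def re using sg o1 o2 I1 I2 by blast
  then show ?thesis by blast
qed

lemma svd_exists:
  assumes fin: "finite Rw" "finite Cl"
  shows "\<exists>k \<sigma> u v. is_svd Rw Cl X k \<sigma> u v"
proof (rule ccontr)
  \<comment> \<open>Greedy deflation never gets stuck, so it would produce more orthonormal vectors than card Rw.\<close>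
  assume nex: "\<not> ?thesis"
  have "\<exists>\<sigma> u v. partial_svd Rw Cl X n \<sigma> u v" for n
  proof (induction n)
    case 0
    show ?case by (auto simp: partial_svd_def orthonormal_on_def)
  next
    case (Suc n)
    then obtain \<sigma> u v where inv: "partial_svd Rw Cl X n \<sigma> u v" by blast
    show ?case
    proof (cases "\<exists>r0\<in>Rw. \<exists>c0\<in>Cl. svd_residual X n \<sigma> u v r0 c0 \<noteq> 0")
      case True
      then show ?thesis using partial_svd_extend[OF fin inv] by blast
    next
      case False
      then have "\<forall>r\<in>Rw. \<forall>c\<in>Cl. X r c = (\<Sum>d<n. \<sigma> d * u d r * v d c)"
        unfolding svd_residual_def by auto
      then have "is_svd Rw Cl X n \<sigma> u v"
        using inv unfolding partial_svd_def is_svd_iff by blast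
      then show ?thesis using nex by blast
    qed
  qed
  then obtain \<sigma> u v where "partial_svd Rw Cl X (Suc (card Rw)) \<sigma> u v" by blast
  then have "orthonormal_on Rw (Suc (card Rw)) u" unfolding partial_svd_def by blast
  then have "Suc (card Rw) \<le> card Rw" using orthonormal_on_card_le fin(1) by blast
  then show False by simp
qed

section \<open>Singular values and low-rank approximation\<close>

lemma svd_sum_squares:
  assumes svd: "is_svd Rw Cl X k \<sigma> u v" and fin: "finite Rw" "finite Cl"
  shows "(\<Sum>r\<in>Rw. \<Sum>c\<in>Cl. (X r c)\<^sup>2) = (\<Sum>d<k. (\<sigma> d)\<^sup>2)"
proof -
  have ou: "orthonormal_on Rw k u" and ov: "orthonormal_on Cl k v" and X: "\<forall>r\<in>Rw. \<forall>c\<in>Cl. X r c = (\<Sum>d<k. \<sigma> d * u d r * v d c)"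
    using svd unfolding is_svd_iff by blast+
  have "(\<Sum>r\<in>Rw. \<Sum>c\<in>Cl. (X r c)\<^sup>2) = (\<Sum>r\<in>Rw. \<Sum>c\<in>Cl. (\<Sum>d<k. (\<sigma> d * u d r) * v d c) * (\<Sum>d<k. (\<sigma> d * u d r) * v d c))"
    using X by (intro sum.cong refl) (simp add: power2_eq_square)
  also have "\<dots> = (\<Sum>r\<in>Rw. \<Sum>d<k. (\<sigma> d * u d r) * (\<sigma> d * u d r))"
    by (simp add: orthonormal_on_sum_combinations[OF ov])
  also have "\<dots> = (\<Sum>d<k. (\<sigma> d)\<^sup>2 * (\<Sum>r\<in>Rw. u d r * u d r))"
    by (subst sum.swap) (simp add: sum_distrib_left power2_eq_square algebra_simps)
  also have "\<dots> = (\<Sum>d<k. (\<sigma> d)\<^sup>2)"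
    using ou unfolding orthonormal_on_def by (intro sum.cong) auto
  finally show ?thesis .
qed

lemma svd_sum_sq_project:
  assumes svd: "is_svd Rw Cl X k \<sigma> u v" and fin: "finite Rw" "finite Cl"
  shows "(\<Sum>c\<in>Cl. (\<Sum>r\<in>Rw. X r c * e r)\<^sup>2) = (\<Sum>d<k. (\<sigma> d)\<^sup>2 * (\<Sum>r\<in>Rw. u d r * e r)\<^sup>2)"
proof -
  have ov: "orthonormal_on Cl k v" and X: "\<forall>r\<in>Rw. \<forall>c\<in>Cl. X r c = (\<Sum>d<k. \<sigma> d * u d r * v d c)"
    using svd unfolding is_svd_iff by blast+
  have "\<forall>c\<in>Cl. (\<Sum>r\<in>Rw. X r c * e r) = (\<Sum>d<k. (\<sigma> d * (\<Sum>r\<in>Rw. u d r * e r)) * v d c)"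
  proof
    fix c assume c: "c \<in> Cl"
    have "(\<Sum>r\<in>Rw. X r c * e r) = (\<Sum>r\<in>Rw. (\<Sum>d<k. \<sigma> d * u d r * v d c) * e r)"
      using X c by (intro sum.cong) auto
    also have "\<dots> = (\<Sum>d<k. (\<sigma> d * (\<Sum>r\<in>Rw. u d r * e r)) * v d c)"
      by (simp add: sum_distrib_left sum_distrib_right sum.swap[of _ Rw] algebra_simps)
    finally show "(\<Sum>r\<in>Rw. X r c * e r) = (\<Sum>d<k. (\<sigma> d * (\<Sum>r\<in>Rw. u d r * e r)) * v d c)" .
  qed
  then have "(\<Sum>c\<in>Cl. (\<Sum>r\<in>Rw. X r c * e r)\<^sup>2) = (\<Sum>c\<in>Cl. (\<Sum>d<k. (\<sigma> d * (\<Sum>r\<in>Rw. u d r * e r)) * v d c) * (\<Sum>d<k. (\<sigma> d * (\<Sum>r\<in>Rw. u d r * e r)) * v d c))"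
    by (intro sum.cong) (auto simp: power2_eq_square)
  also have "\<dots> = (\<Sum>d<k. (\<sigma> d * (\<Sum>r\<in>Rw. u d r * e r)) * (\<sigma> d * (\<Sum>r\<in>Rw. u d r * e r)))"
    by (rule orthonormal_on_sum_combinations[OF ov])
  finally show ?thesis by (simp add: power2_eq_square algebra_simps)
qed

lemma svd_singular_value:
  assumes svd: "is_svd Rw Cl X k \<sigma> u v" and d: "d < k"
  shows "(\<Sum>r\<in>Rw. \<Sum>c\<in>Cl. u d r * X r c * v d c) = \<sigma> d"
proof -
  have ou: "orthonormal_on Rw k u" and ov: "orthonormal_on Cl k v" and X: "\<forall>r\<in>Rw. \<forall>c\<in>Cl. X r c = (\<Sum>e<k. \<sigma> e * u e r * v e c)"
    using svd unfolding is_svd_iff by blast+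
  have inner: "(\<Sum>c\<in>Cl. X r c * v d c) = \<sigma> d * u d r" if r: "r \<in> Rw" for r
  proof -
    have "(\<Sum>c\<in>Cl. X r c * v d c) = (\<Sum>c\<in>Cl. v d c * (\<Sum>e<k. (\<sigma> e * u e r) * v e c))"
      using X r by (intro sum.cong) (auto simp: algebra_simps)
    also have "\<dots> = (\<Sum>e<k. (\<sigma> e * u e r) * (\<Sum>c\<in>Cl. v d c * v e c))"
      by (rule sum_mult_combination_swap)
    also have "\<dots> = (\<Sum>e<k. (\<sigma> e * u e r) * (if d = e then 1 else 0))"
      using ov d unfolding orthonormal_on_def by (intro sum.cong) auto
    also have "\<dots> = \<sigma> d * u d r" using d by (simp add: if_distrib cong: if_cong)
    finally show ?thesis .
  qed
  have "(\<Sum>r\<in>Rw. \<Sum>c\<in>Cl. u d r * X r c * v d c) = (\<Sum>r\<in>Rw. u d r * (\<Sum>c\<in>Cl. X r c * v d c))"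
    by (simp add: sum_distrib_left algebra_simps)
  also have "\<dots> = (\<Sum>r\<in>Rw. \<sigma> d * (u d r * u d r))" using inner by (intro sum.cong) auto
  also have "\<dots> = \<sigma> d" using ou d unfolding orthonormal_on_def by (simp add: sum_distrib_left[symmetric])
  finally show ?thesis .
qed

lemma low_rank_orthonormal_form:
  assumes fin: "finite Rw" and Y: "\<forall>r\<in>Rw. \<forall>c\<in>Cl. Y r c = (\<Sum>i<n. f i r * g i c)"
  obtains m e h where "m \<le> n" "orthonormal_on Rw m e" "\<forall>r\<in>Rw. \<forall>c\<in>Cl. Y r c = (\<Sum>j<m. h j c * e j r)"
proof -
  obtain m e where m: "m \<le> n" and oe: "orthonormal_on Rw m e" and sp: "\<forall>i<n. in_span_on Rw m e (f i)"
    using gram_schmidt_span[OF fin] by blast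
  then have "\<forall>i. \<exists>\<beta>. i < n \<longrightarrow> (\<forall>x\<in>Rw. f i x = (\<Sum>j<m. \<beta> j * e j x))"
    unfolding in_span_on_def by blast
  from choice[OF this] obtain \<alpha> where rep: "\<forall>i<n. \<forall>x\<in>Rw. f i x = (\<Sum>j<m. \<alpha> i j * e j x)"
    by blast
  define h where "h j c = (\<Sum>i<n. \<alpha> i j * g i c)" for j c
  have "\<forall>r\<in>Rw. \<forall>c\<in>Cl. Y r c = (\<Sum>j<m. h j c * e j r)"
  proof (intro ballI)
    fix r c assume r: "r \<in> Rw" and c: "c \<in> Cl"
    have "Y r c = (\<Sum>i<n. (\<Sum>j<m. \<alpha> i j * e j r) * g i c)"
      using Y rep r c by (auto intro: sum.cong)
    also have "\<dots> = (\<Sum>j<m. h j c * e j r)"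
      by (simp add: h_def sum_distrib_left sum_distrib_right sum.swap[of _ "{..<n}"] algebra_simps)
    finally show "Y r c = (\<Sum>j<m. h j c * e j r)" .
  qed
  with m oe show thesis by (rule that)
qed

lemma sum_sq_diff_low_rank_ge:
  fixes X :: "'r \<Rightarrow> 'c \<Rightarrow> real"
  assumes "orthonormal_on Rw m e" "finite Rw" "finite Cl"
  shows "(\<Sum>r\<in>Rw. \<Sum>c\<in>Cl. (X r c - (\<Sum>j<m. h j c * e j r))\<^sup>2)
           \<ge> (\<Sum>r\<in>Rw. \<Sum>c\<in>Cl. (X r c)\<^sup>2) - (\<Sum>j<m. \<Sum>c\<in>Cl. (\<Sum>r\<in>Rw. X r c * e j r)\<^sup>2)"
proof -
  have "(\<Sum>c\<in>Cl. \<Sum>r\<in>Rw. (X r c - (\<Sum>j<m. h j c * e j r))\<^sup>2)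
      \<ge> (\<Sum>c\<in>Cl. (\<Sum>r\<in>Rw. (X r c)\<^sup>2) - (\<Sum>j<m. (\<Sum>r\<in>Rw. X r c * e j r)\<^sup>2))"
    by (intro sum_mono sum_sq_diff_span_ge[OF assms(1,2)])
  moreover have "(\<Sum>c\<in>Cl. \<Sum>r\<in>Rw. F r c) = (\<Sum>r\<in>Rw. \<Sum>c\<in>Cl. F r c)" for F :: "'r \<Rightarrow> 'c \<Rightarrow> real"
    by (rule sum.swap)
  moreover have "(\<Sum>c\<in>Cl. \<Sum>j<m. G j c) = (\<Sum>j<m. \<Sum>c\<in>Cl. G j c)" for G :: "nat \<Rightarrow> 'c \<Rightarrow> real"
    by (rule sum.swap)
  ultimately show ?thesis by (simp only: sum_subtractf)
qed

lemma svd_low_rank_tail: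
  assumes svd: "is_svd Rw Cl X k \<sigma> u v" and fin: "finite Rw" "finite Cl"
    and Y: "\<forall>r\<in>Rw. \<forall>c\<in>Cl. Y r c = (\<Sum>i<n. f i r * g i c)"
  shows "\<exists>cc. (\<forall>d<k. 0 \<le> cc d \<and> cc d \<le> 1) \<and> (\<Sum>d<k. cc d) \<le> real n \<and>
     (\<Sum>d<k. (\<sigma> d)\<^sup>2 * (1 - cc d)) \<le> (\<Sum>r\<in>Rw. \<Sum>c\<in>Cl. (X r c - Y r c)\<^sup>2)"
proof -
  have ou: "orthonormal_on Rw k u" and ov: "orthonormal_on Cl k v"
    using svd unfolding is_svd_iff by blast+
  obtain m e h where m: "m \<le> n" and oe: "orthonormal_on Rw m e"
    and Y': "\<forall>r\<in>Rw. \<forall>c\<in>Cl. Y r c = (\<Sum>j<m. h j c * e j r)"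
    using low_rank_orthonormal_form[OF fin(1) Y] by blast
  \<comment> \<open>cc d is the squared length of the projection of u d onto the row space of Y.\<close>
  define cc where "cc d = (\<Sum>j<m. (\<Sum>r\<in>Rw. u d r * e j r)\<^sup>2)" for d
  have c1: "\<forall>d<k. 0 \<le> cc d \<and> cc d \<le> 1"
  proof (intro allI impI conjI)
    fix d assume d: "d < k"
    show "0 \<le> cc d" by (simp add: cc_def sum_nonneg)
    have "cc d \<le> (\<Sum>r\<in>Rw. (u d r)\<^sup>2)" unfolding cc_def by (rule bessel_inequality[OF oe fin(1)])
    also have "\<dots> = 1" using ou d unfolding orthonormal_on_def by (simp add: power2_eq_square)
    finally show "cc d \<le> 1" .
  qed
  have c2: "(\<Sum>d<k. cc d) \<le> real n"
  proof -
    have "(\<Sum>d<k. cc d) = (\<Sum>j<m. \<Sum>d<k. (\<Sum>r\<in>Rw. e j r * u d r)\<^sup>2)"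
      unfolding cc_def by (subst sum.swap) (simp add: mult.commute)
    also have "\<dots> \<le> (\<Sum>j<m. \<Sum>r\<in>Rw. (e j r)\<^sup>2)"
      by (intro sum_mono bessel_inequality[OF ou fin(1)])
    also have "\<dots> = real m" using oe unfolding orthonormal_on_def by (simp add: power2_eq_square)
    finally show ?thesis using m by simp
  qed
  have "(\<Sum>r\<in>Rw. \<Sum>c\<in>Cl. (X r c - Y r c)\<^sup>2) = (\<Sum>r\<in>Rw. \<Sum>c\<in>Cl. (X r c - (\<Sum>j<m. h j c * e j r))\<^sup>2)"
    using Y' by (intro sum.cong refl) auto
  also have "\<dots> \<ge> (\<Sum>r\<in>Rw. \<Sum>c\<in>Cl. (X r c)\<^sup>2) - (\<Sum>j<m. \<Sum>c\<in>Cl. (\<Sum>r\<in>Rw. X r c * e j r)\<^sup>2)"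
    by (rule sum_sq_diff_low_rank_ge[OF oe fin])
  also have "(\<Sum>j<m. \<Sum>c\<in>Cl. (\<Sum>r\<in>Rw. X r c * e j r)\<^sup>2) = (\<Sum>j<m. \<Sum>d<k. (\<sigma> d)\<^sup>2 * (\<Sum>r\<in>Rw. u d r * e j r)\<^sup>2)"
    by (intro sum.cong refl svd_sum_sq_project[OF svd fin])
  also have "\<dots> = (\<Sum>d<k. (\<sigma> d)\<^sup>2 * cc d)"
    unfolding cc_def by (subst sum.swap) (simp add: sum_distrib_left)
  also have "(\<Sum>r\<in>Rw. \<Sum>c\<in>Cl. (X r c)\<^sup>2) = (\<Sum>d<k. (\<sigma> d)\<^sup>2)" by (rule svd_sum_squares[OF svd fin])
  finally have "(\<Sum>d<k. (\<sigma> d)\<^sup>2 * (1 - cc d)) \<le> (\<Sum>r\<in>Rw. \<Sum>c\<in>Cl. (X r c - Y r c)\<^sup>2)"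
    by (simp add: algebra_simps sum_subtractf)
  then show ?thesis using c1 c2 by blast
qed

lemma two_abs_mult_le:
  fixes a b t :: real
  assumes "t > 0" shows "2 * \<bar>a * b\<bar> \<le> t * a\<^sup>2 + b\<^sup>2 / t"
proof -
  have "0 \<le> (t * \<bar>a\<bar> - \<bar>b\<bar>)\<^sup>2" by simp
  then have "2 * \<bar>a * b\<bar> * t \<le> (t * a\<^sup>2 + b\<^sup>2 / t) * t"
    using assms by (simp add: power2_eq_square algebra_simps abs_mult)
  then show ?thesis using assms by simp
qed

lemma schur_test:
  fixes X :: "'r \<Rightarrow> 'c \<Rightarrow> real"
  assumes fin: "finite Rw" "finite Cl" and X0: "\<forall>r\<in>Rw. \<forall>c\<in>Cl. X r c \<ge> 0"
    and rs: "\<forall>r\<in>Rw. (\<Sum>c\<in>Cl. X r c) \<le> \<beta>" and cs: "\<forall>c\<in>Cl. (\<Sum>r\<in>Rw. X r c) \<le> 1"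
    and \<beta>: "\<beta> > 0" and u: "(\<Sum>r\<in>Rw. (u r)\<^sup>2) = 1" and v: "(\<Sum>c\<in>Cl. (v c)\<^sup>2) = 1"
  shows "(\<Sum>r\<in>Rw. \<Sum>c\<in>Cl. u r * X r c * v c)\<^sup>2 \<le> \<beta>"
proof -
  define t where "t = 1 / sqrt \<beta>"
  have t: "t > 0" using \<beta> by (simp add: t_def)
  have row: "(\<Sum>r\<in>Rw. \<Sum>c\<in>Cl. X r c * (u r)\<^sup>2) \<le> \<beta>"
  proof -
    have "(\<Sum>r\<in>Rw. \<Sum>c\<in>Cl. X r c * (u r)\<^sup>2) = (\<Sum>r\<in>Rw. (\<Sum>c\<in>Cl. X r c) * (u r)\<^sup>2)"
      by (simp add: sum_distrib_right)
    also have "\<dots> \<le> (\<Sum>r\<in>Rw. \<beta> * (u r)\<^sup>2)" using rs by (intro sum_mono mult_right_mono) auto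
    finally show ?thesis using u by (simp add: sum_distrib_left[symmetric])
  qed
  have col: "(\<Sum>r\<in>Rw. \<Sum>c\<in>Cl. X r c * (v c)\<^sup>2) \<le> 1"
  proof -
    have "(\<Sum>r\<in>Rw. \<Sum>c\<in>Cl. X r c * (v c)\<^sup>2) = (\<Sum>c\<in>Cl. (\<Sum>r\<in>Rw. X r c) * (v c)\<^sup>2)"
      by (subst sum.swap) (simp add: sum_distrib_right)
    also have "\<dots> \<le> (\<Sum>c\<in>Cl. 1 * (v c)\<^sup>2)" using cs by (intro sum_mono mult_right_mono) auto
    finally show ?thesis using v by simp
  qed
  have "\<bar>\<Sum>r\<in>Rw. \<Sum>c\<in>Cl. u r * X r c * v c\<bar> \<le> (\<Sum>r\<in>Rw. \<Sum>c\<in>Cl. \<bar>u r * X r c * v c\<bar>)"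
    by (rule order_trans[OF sum_abs sum_mono[OF sum_abs]])
  also have "\<dots> = (\<Sum>r\<in>Rw. \<Sum>c\<in>Cl. X r c * \<bar>u r * v c\<bar>)"
    using X0 by (intro sum.cong refl) (auto simp: abs_mult)
  finally have "2 * \<bar>\<Sum>r\<in>Rw. \<Sum>c\<in>Cl. u r * X r c * v c\<bar> \<le> 2 * (\<Sum>r\<in>Rw. \<Sum>c\<in>Cl. X r c * \<bar>u r * v c\<bar>)"
    by simp
  also have "\<dots> = (\<Sum>r\<in>Rw. \<Sum>c\<in>Cl. X r c * (2 * \<bar>u r * v c\<bar>))"
    by (simp add: sum_distrib_left algebra_simps)
  also have "\<dots> \<le> (\<Sum>r\<in>Rw. \<Sum>c\<in>Cl. X r c * (t * (u r)\<^sup>2 + (v c)\<^sup>2 / t))"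
    using X0 two_abs_mult_le[OF t] by (intro sum_mono mult_left_mono) auto
  also have "\<dots> = t * (\<Sum>r\<in>Rw. \<Sum>c\<in>Cl. X r c * (u r)\<^sup>2) + (\<Sum>r\<in>Rw. \<Sum>c\<in>Cl. X r c * (v c)\<^sup>2) / t"
    by (simp add: distrib_left sum.distrib sum_distrib_left sum_divide_distrib mult_ac)
  also have "\<dots> \<le> t * \<beta> + 1 / t" using row col t by (intro add_mono mult_left_mono divide_right_mono) auto
  also have "\<dots> = 2 * sqrt \<beta>" using \<beta> by (simp add: t_def real_div_sqrt)
  finally have "\<bar>\<Sum>r\<in>Rw. \<Sum>c\<in>Cl. u r * X r c * v c\<bar> \<le> sqrt \<beta>" by simp
  then have "\<bar>\<Sum>r\<in>Rw. \<Sum>c\<in>Cl. u r * X r c * v c\<bar>\<^sup>2 \<le> (sqrt \<beta>)\<^sup>2" by (intro power_mono) auto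
  then show ?thesis using \<beta> by simp
qed

section \<open>Entropy estimates\<close>

definition ln_ratio_term :: "real \<Rightarrow> real \<Rightarrow> real" where
  "ln_ratio_term a b = (if a = 0 then 0 else a * ln (b / a))"

lemma ln_ratio_term_scale: "ln_ratio_term (c * a) (c * b) = c * ln_ratio_term a b"
  by (cases "c = 0") (simp_all add: ln_ratio_term_def)

lemma ln_ratio_term_one:
  assumes "0 \<le> x" shows "ln_ratio_term x 1 = - (if x = 0 then 0 else x * ln x)"
  using assms by (simp add: ln_ratio_term_def ln_div)

lemma ln_ratio_term_one_nonneg:
  assumes "0 \<le> x" "x \<le> 1" shows "0 \<le> ln_ratio_term x 1"
  using assms by (cases "x = 0") (simp_all add: ln_ratio_term_def)

lemma log_sum_inequality:
  fixes a b :: "nat \<Rightarrow> real"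
  assumes a: "\<forall>d<k. a d \<ge> 0" and b: "\<forall>d<k. b d \<ge> 0" and ab: "\<forall>d<k. a d > 0 \<longrightarrow> b d > 0"
  shows "(\<Sum>d<k. ln_ratio_term (a d) (b d)) \<le> ln_ratio_term (\<Sum>d<k. a d) (\<Sum>d<k. b d)"
proof (cases "(\<Sum>d<k. a d) = 0")
  case True
  then have "\<forall>d<k. a d = 0" using a by (subst (asm) sum_nonneg_eq_0_iff) auto
  then show ?thesis by (simp add: ln_ratio_term_def)
next
  case False
  define A where "A = (\<Sum>d<k. a d)"
  define B where "B = (\<Sum>d<k. b d)"
  have "A \<ge> 0" unfolding A_def using a by (intro sum_nonneg) auto
  then have Apos: "A > 0" using False by (simp add: A_def)
  obtain d0 where d0: "d0 < k" "a d0 > 0"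
    using False a by (metis (no_types, lifting) order_less_le sum.neutral lessThan_iff)
  have "b d0 \<le> B" unfolding B_def using b d0 by (intro member_le_sum) auto
  then have Bpos: "B > 0" using ab d0 by auto
  have tm: "(if a d = 0 then 0 else a d * ln (b d / a d)) \<le> a d * ln (B / A) + b d * A / B - a d" if d: "d < k" for d
  proof (cases "a d = 0")
    case True then show ?thesis using b d Apos Bpos by simp
  next
    case False
    then have adp: "a d > 0" using a d by (simp add: order_less_le)
    then have bdp: "b d > 0" using ab d by simp
    have "ln ((b d / a d) / (B / A)) \<le> (b d / a d) / (B / A) - 1"
      by (rule ln_le_minus_one) (use adp bdp Apos Bpos in simp)
    moreover have "ln ((b d / a d) / (B / A)) = ln (b d / a d) - ln (B / A)"
      using adp bdp Apos Bpos by (simp add: ln_div ln_mult)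
    ultimately have "ln (b d / a d) \<le> ln (B / A) + (b d / a d) / (B / A) - 1" by simp
    then have "a d * ln (b d / a d) \<le> a d * (ln (B / A) + (b d / a d) / (B / A) - 1)"
      using adp by (simp add: mult_left_mono)
    also have "\<dots> = a d * ln (B / A) + b d * A / B - a d"
      using adp Apos Bpos by (simp add: field_simps)
    finally show ?thesis using False by simp
  qed
  have "(\<Sum>d<k. if a d = 0 then 0 else a d * ln (b d / a d)) \<le> (\<Sum>d<k. a d * ln (B / A) + b d * A / B - a d)"
    by (intro sum_mono tm) simp
  also have "\<dots> = A * ln (B / A) + B * A / B - A"
    by (simp add: A_def B_def sum_subtractf sum.distrib sum_distrib_right sum_divide_distrib[symmetric])
  also have "\<dots> = A * ln (B / A)" using Bpos by simp
  finally show ?thesis using False by (simp add: A_def B_def ln_ratio_term_def)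
qed

lemma neg_mult_ln_le_2_sqrt:
  fixes t :: real
  assumes "0 < t" shows "- (t * ln t) \<le> 2 * sqrt t"
proof -
  have sp: "sqrt t > 0" using assms by simp
  have "ln (1 / sqrt t) \<le> 1 / sqrt t - 1" by (rule ln_le_minus_one) (use sp in simp)
  moreover have "ln (1 / sqrt t) = - ln t / 2" using assms by (simp add: ln_div ln_sqrt)
  ultimately have "- ln t \<le> 2 / sqrt t" by simp
  then have "t * (- ln t) \<le> t * (2 / sqrt t)" using assms by (intro mult_left_mono) auto
  also have "t * (2 / sqrt t) = 2 * sqrt t" using assms
    by (metis real_div_sqrt less_eq_real_def times_divide_eq_right mult.commute)
  finally show ?thesis by simp
qed

lemma neg_one_minus_mult_ln_le:
  fixes t :: real
  assumes "0 \<le> t" "t < 1" shows "- ((1 - t) * ln (1 - t)) \<le> t"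
proof -
  have "ln (1 / (1 - t)) \<le> 1 / (1 - t) - 1" by (rule ln_le_minus_one) (use assms in simp)
  moreover have "ln (1 / (1 - t)) = - ln (1 - t)" using assms by (simp add: ln_div)
  ultimately have "- ln (1 - t) \<le> 1 / (1 - t) - 1" by simp
  then have "(1 - t) * (- ln (1 - t)) \<le> (1 - t) * (1 / (1 - t) - 1)"
    using assms by (intro mult_left_mono) auto
  also have "\<dots> = t" using assms by (simp add: field_simps)
  finally show ?thesis by simp
qed

lemma ln_ratio_term_le:
  assumes "0 \<le> A" "A \<le> B" "B \<le> M" "A \<le> 1" "1 \<le> M"
  shows "ln_ratio_term A B \<le> A * ln M + ln_ratio_term A 1"
proof (cases "A = 0")
  case False
  then have A: "A > 0" and B: "B > 0" using assms by auto
  then have "ln (B / A) \<le> ln M + ln (1 / A)" using assms by (simp add: ln_div)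
  then have "A * ln (B / A) \<le> A * (ln M + ln (1 / A))" using A by (intro mult_left_mono) auto
  then show ?thesis using False by (simp add: ln_ratio_term_def algebra_simps)
qed (simp add: ln_ratio_term_def)

lemma ln_ratio_term_pair_le:
  assumes t: "0 \<le> t" "t \<le> \<delta>\<^sup>2" and \<delta>: "0 \<le> \<delta>" "\<delta> \<le> 1/4"
  shows "ln_ratio_term (1 - t) 1 + ln_ratio_term t 1 \<le> 2 * sqrt (2 * \<delta>)"
proof -
  have d2: "\<delta>\<^sup>2 \<le> \<delta> / 4"
    using mult_left_mono[OF \<delta>(2) \<delta>(1)] by (simp add: power2_eq_square)
  then have t1: "t < 1" using t \<delta> by linarith
  have "ln_ratio_term (1 - t) 1 \<le> \<delta>\<^sup>2"
    using neg_one_minus_mult_ln_le[OF t(1) t1] t t1 by (simp add: ln_ratio_term_one)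
  moreover have "ln_ratio_term t 1 \<le> 2 * \<delta>"
  proof (cases "t = 0")
    case False
    then have "ln_ratio_term t 1 \<le> 2 * sqrt t"
      using neg_mult_ln_le_2_sqrt t by (simp add: ln_ratio_term_one)
    also have "sqrt t \<le> \<delta>" using t \<delta> by (metis real_sqrt_le_mono real_sqrt_abs abs_of_nonneg)
    finally show ?thesis by simp
  qed (use \<delta> in \<open>simp add: ln_ratio_term_def\<close>)
  moreover have "2 * \<delta> \<le> sqrt (2 * \<delta>)"
    using mult_left_le[of "2 * \<delta>" "2 * \<delta>"] \<delta> by (intro real_le_rsqrt) (simp add: power2_eq_square)
  ultimately show ?thesis using d2 \<delta> by linarith
qed

lemma entropy_le_of_weights:
  fixes \<rho> cc :: "nat \<Rightarrow> real"
  assumes \<rho>0: "\<forall>d<k. 0 \<le> \<rho> d" and \<rho>sum: "(\<Sum>d<k. \<rho> d) = 1"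
    and cc: "\<forall>d<k. 0 \<le> cc d \<and> cc d \<le> 1" and ccR: "(\<Sum>d<k. cc d) \<le> R" and R1: "1 \<le> R"
    and kK: "real k \<le> K" and tail: "(\<Sum>d<k. (1 - cc d) * \<rho> d) \<le> \<delta>\<^sup>2"
    and \<delta>: "0 \<le> \<delta>" "\<delta> \<le> 1/4"
  shows "(\<Sum>d<k. ln_ratio_term (\<rho> d) 1) \<le> ln R + 2 * \<delta> * ln K + 2 * sqrt (2 * \<delta>)"
proof -
  define t where "t = (\<Sum>d<k. (1 - cc d) * \<rho> d)"
  have \<rho>1: "\<rho> d \<le> 1" if "d < k" for d
    using member_le_sum[of d "{..<k}" \<rho>] that \<rho>0 \<rho>sum by simp
  have K1: "1 \<le> K" using \<rho>sum kK by (cases k) auto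
  have t0: "0 \<le> t" unfolding t_def using \<rho>0 cc by (intro sum_nonneg) auto
  have "\<delta>\<^sup>2 \<le> \<delta>" using mult_left_mono[of \<delta> 1 \<delta>] \<delta> by (simp add: power2_eq_square)
  then have t\<delta>: "t \<le> 2 * \<delta>" "t \<le> 1" using tail \<delta> unfolding t_def[symmetric] by linarith+
  have kept: "(\<Sum>d<k. cc d * \<rho> d) = 1 - t"
    using \<rho>sum by (simp add: t_def algebra_simps sum_subtractf)
  \<comment> \<open>Split each weight into a part kept by the approximation and a discarded part.\<close>
  have "ln_ratio_term (\<rho> d) 1
      = ln_ratio_term (cc d * \<rho> d) (cc d) + ln_ratio_term ((1 - cc d) * \<rho> d) (1 - cc d)" for d
    using ln_ratio_term_scale[of "cc d" "\<rho> d" 1] ln_ratio_term_scale[of "1 - cc d" "\<rho> d" 1]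
    by (simp add: algebra_simps)
  then have "(\<Sum>d<k. ln_ratio_term (\<rho> d) 1)
      = (\<Sum>d<k. ln_ratio_term (cc d * \<rho> d) (cc d)) + (\<Sum>d<k. ln_ratio_term ((1 - cc d) * \<rho> d) (1 - cc d))"
    by (simp add: sum.distrib)
  also have "\<dots> \<le> ln_ratio_term (1 - t) (\<Sum>d<k. cc d) + ln_ratio_term t (\<Sum>d<k. 1 - cc d)"
  proof (rule add_mono)
    have "(\<Sum>d<k. ln_ratio_term (cc d * \<rho> d) (cc d)) \<le> ln_ratio_term (\<Sum>d<k. cc d * \<rho> d) (\<Sum>d<k. cc d)"
      using cc \<rho>0 by (intro log_sum_inequality) (auto simp: zero_less_mult_iff)
    then show "(\<Sum>d<k. ln_ratio_term (cc d * \<rho> d) (cc d)) \<le> ln_ratio_term (1 - t) (\<Sum>d<k. cc d)"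
      unfolding kept .
    show "(\<Sum>d<k. ln_ratio_term ((1 - cc d) * \<rho> d) (1 - cc d)) \<le> ln_ratio_term t (\<Sum>d<k. 1 - cc d)"
      unfolding t_def using cc \<rho>0 by (intro log_sum_inequality) (auto simp: zero_less_mult_iff)
  qed
  also have "\<dots> \<le> ((1 - t) * ln R + ln_ratio_term (1 - t) 1) + (t * ln K + ln_ratio_term t 1)"
  proof (intro add_mono ln_ratio_term_le)
    show "1 - t \<le> (\<Sum>d<k. cc d)" unfolding kept[symmetric]
      using cc \<rho>1 by (intro sum_mono) (auto intro: mult_left_le)
    show "t \<le> (\<Sum>d<k. 1 - cc d)" unfolding t_def
      using cc \<rho>1 by (intro sum_mono) (auto intro: mult_left_le)
    show "(\<Sum>d<k. 1 - cc d) \<le> K" using cc kK sum_mono[of "{..<k}" "\<lambda>d. 1 - cc d" "\<lambda>_. 1"] by auto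
  qed (use t0 t\<delta> ccR R1 K1 in auto)
  also have "\<dots> \<le> ln R + 2 * \<delta> * ln K + 2 * sqrt (2 * \<delta>)"
  proof -
    have "(1 - t) * ln R \<le> ln R" using t0 R1 mult_right_mono[of "1 - t" 1 "ln R"] by simp
    moreover have "t * ln K \<le> 2 * \<delta> * ln K" using t\<delta> K1 by (intro mult_right_mono) auto
    moreover have "ln_ratio_term (1 - t) 1 + ln_ratio_term t 1 \<le> 2 * sqrt (2 * \<delta>)"
      using ln_ratio_term_pair_le[OF t0 _ \<delta>] tail unfolding t_def[symmetric] by blast
    ultimately show ?thesis by linarith
  qed
  finally show ?thesis .
qed

lemma sv_entropy_eq_sum_ln_ratio_term:
  "sv_entropy k \<sigma> = (\<Sum>d<k. ln_ratio_term ((\<sigma> d)\<^sup>2 / (\<Sum>e<k. (\<sigma> e)\<^sup>2)) 1)"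
proof -
  have "0 \<le> (\<sigma> d)\<^sup>2 / (\<Sum>e<k. (\<sigma> e)\<^sup>2)" for d by (simp add: sum_nonneg)
  then show ?thesis unfolding sv_entropy_def Let_def by (simp add: ln_ratio_term_one sum_negf)
qed

lemma sv_entropy_le_of_tail:
  fixes \<sigma> cc :: "nat \<Rightarrow> real" and R K \<delta> :: real
  assumes Tpos: "(\<Sum>d<k. (\<sigma> d)\<^sup>2) > 0"
    and cc: "\<forall>d<k. 0 \<le> cc d \<and> cc d \<le> 1" and ccR: "(\<Sum>d<k. cc d) \<le> R" and R1: "1 \<le> R"
    and kK: "real k \<le> K"
    and tail: "(\<Sum>d<k. (\<sigma> d)\<^sup>2 * (1 - cc d)) \<le> \<delta>\<^sup>2 * (\<Sum>d<k. (\<sigma> d)\<^sup>2)"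
    and \<delta>: "0 \<le> \<delta>" "\<delta> \<le> 1/4"
  shows "sv_entropy k \<sigma> \<le> ln R + 2 * \<delta> * ln K + 2 * sqrt (2 * \<delta>)"
proof -
  define T where "T = (\<Sum>d<k. (\<sigma> d)\<^sup>2)"
  have "(\<Sum>d<k. ln_ratio_term ((\<sigma> d)\<^sup>2 / T) 1) \<le> ln R + 2 * \<delta> * ln K + 2 * sqrt (2 * \<delta>)"
  proof (rule entropy_le_of_weights[OF _ _ cc ccR R1 kK _ \<delta>])
    show "\<forall>d<k. 0 \<le> (\<sigma> d)\<^sup>2 / T" using Tpos by (simp add: T_def)
    show "(\<Sum>d<k. (\<sigma> d)\<^sup>2 / T) = 1" using Tpos by (simp add: T_def sum_divide_distrib[symmetric])
    have "(\<Sum>d<k. (1 - cc d) * ((\<sigma> d)\<^sup>2 / T)) = (\<Sum>d<k. (\<sigma> d)\<^sup>2 * (1 - cc d)) / T"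
      by (simp add: sum_divide_distrib algebra_simps)
    also have "\<dots> \<le> \<delta>\<^sup>2" using tail Tpos by (simp add: T_def divide_le_eq)
    finally show "(\<Sum>d<k. (1 - cc d) * ((\<sigma> d)\<^sup>2 / T)) \<le> \<delta>\<^sup>2" .
  qed
  then show ?thesis by (simp add: sv_entropy_eq_sum_ln_ratio_term T_def)
qed

lemma sv_entropy_nonneg: "0 \<le> sv_entropy k \<sigma>"
proof -
  define T where "T = (\<Sum>e<k. (\<sigma> e)\<^sup>2)"
  have "0 \<le> ln_ratio_term ((\<sigma> d)\<^sup>2 / T) 1" if "d < k" for d
  proof -
    have "(\<sigma> d)\<^sup>2 \<le> T" unfolding T_def using that by (intro member_le_sum) auto
    moreover have "0 \<le> T" unfolding T_def by (simp add: sum_nonneg)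
    ultimately have "(\<sigma> d)\<^sup>2 / T \<le> 1" by (cases "T = 0") (auto simp: divide_le_eq_1)
    then show ?thesis using \<open>0 \<le> T\<close> by (intro ln_ratio_term_one_nonneg) auto
  qed
  then show ?thesis unfolding sv_entropy_eq_sum_ln_ratio_term T_def[symmetric] by (intro sum_nonneg) auto
qed

lemma sv_entropy_ge_ln:
  fixes \<sigma> :: "nat \<Rightarrow> real"
  assumes T: "(\<Sum>d<k. (\<sigma> d)\<^sup>2) > 0" and b: "\<forall>d<k. (\<sigma> d)\<^sup>2 \<le> \<beta>" and \<beta>: "\<beta> > 0"
  shows "ln ((\<Sum>d<k. (\<sigma> d)\<^sup>2) / \<beta>) \<le> sv_entropy k \<sigma>"
proof -
  define T where "T = (\<Sum>d<k. (\<sigma> d)\<^sup>2)"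
  define \<rho> where "\<rho> d = (\<sigma> d)\<^sup>2 / T" for d
  have Tp: "T > 0" using T by (simp add: T_def)
  have term_ge: "\<rho> d * ln (T / \<beta>) \<le> ln_ratio_term (\<rho> d) 1" if d: "d < k" for d
  proof (cases "\<rho> d = 0")
    case False
    then have \<rho>p: "\<rho> d > 0" using Tp by (simp add: \<rho>_def)
    have "T / \<beta> \<le> 1 / \<rho> d" using b d Tp \<beta> \<rho>p by (simp add: \<rho>_def field_simps)
    then have "ln (T / \<beta>) \<le> ln (1 / \<rho> d)" using Tp \<beta> \<rho>p by (subst ln_le_cancel_iff) auto
    then show ?thesis using \<rho>p False by (simp add: ln_ratio_term_def mult_left_mono)
  qed (simp add: ln_ratio_term_def)
  have "ln (T / \<beta>) = (\<Sum>d<k. \<rho> d * ln (T / \<beta>))"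
    using Tp by (simp add: \<rho>_def sum_distrib_right[symmetric] sum_divide_distrib[symmetric] T_def)
  also have "\<dots> \<le> (\<Sum>d<k. ln_ratio_term (\<rho> d) 1)" by (intro sum_mono term_ge) auto
  also have "\<dots> = sv_entropy k \<sigma>" by (simp add: sv_entropy_eq_sum_ln_ratio_term \<rho>_def T_def)
  finally show ?thesis by (simp add: T_def)
qed

lemma sv_entropy_ge_of_indicator_matrix:
  fixes X :: "'r \<Rightarrow> 'c \<Rightarrow> real" and \<beta> :: nat
  assumes svd: "is_svd Rw Cl X k \<sigma> u v" and fin: "finite Rw" "finite Cl"
    and X: "\<forall>r\<in>Rw. \<forall>c\<in>Cl. X r c = (if G r c then 1 else 0)"
    and V: "V \<subseteq> Rw" "V \<noteq> {}" and \<beta>: "\<beta> \<ge> 1"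
    and rows: "\<forall>r\<in>Rw. card {c\<in>Cl. G r c} = (if r \<in> V then \<beta> else 0)"
    and cols: "\<forall>c\<in>Cl. card {r\<in>Rw. G r c} \<le> 1"
  shows "ln (real (card V)) \<le> sv_entropy k \<sigma>"
proof -
  have rowsum: "(\<Sum>c\<in>Cl. X r c) = (if r \<in> V then real \<beta> else 0)" if "r \<in> Rw" for r
    using that X rows fin by (simp add: sum.If_cases Int_def conj_commute)
  have colsum: "(\<Sum>r\<in>Rw. X r c) \<le> 1" if "c \<in> Cl" for c
    using that X cols fin by (simp add: sum.If_cases Int_def conj_commute)
  have "(\<Sum>d<k. (\<sigma> d)\<^sup>2) = (\<Sum>r\<in>Rw. \<Sum>c\<in>Cl. X r c)"
    using svd_sum_squares[OF svd fin] X by (simp add: if_distrib[of "\<lambda>t. t\<^sup>2"] cong: if_cong)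
  also have "\<dots> = real (card V) * real \<beta>"
    using rowsum fin V by (simp add: sum.If_cases Int_absorb1 Int_commute)
  finally have T: "(\<Sum>d<k. (\<sigma> d)\<^sup>2) = real (card V) * real \<beta>" .
  have "(\<sigma> d)\<^sup>2 \<le> real \<beta>" if d: "d < k" for d
  proof -
    have "(\<Sum>r\<in>Rw. (u d r)\<^sup>2) = 1" "(\<Sum>c\<in>Cl. (v d c)\<^sup>2) = 1"
      using svd d unfolding is_svd_iff orthonormal_on_def by (simp_all add: power2_eq_square)
    then have "(\<Sum>r\<in>Rw. \<Sum>c\<in>Cl. u d r * X r c * v d c)\<^sup>2 \<le> real \<beta>"
      using rowsum colsum X \<beta> by (intro schur_test[OF fin]) auto
    then show ?thesis using svd_singular_value[OF svd d] by simp
  qed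
  moreover have "card V > 0" using V fin finite_subset by (auto simp: card_gt_0_iff)
  ultimately have "ln ((\<Sum>d<k. (\<sigma> d)\<^sup>2) / real \<beta>) \<le> sv_entropy k \<sigma>"
    using \<beta> T by (intro sv_entropy_ge_ln) auto
  then show ?thesis using T \<beta> by simp
qed

section \<open>Matricization and entanglement\<close>

definition merge_idx :: "nat set \<Rightarrow> (nat \<Rightarrow> nat) \<Rightarrow> (nat \<Rightarrow> nat) \<Rightarrow> nat \<Rightarrow> nat" where
  "merge_idx J r c = (\<lambda>n. if n \<in> J then r n else c n)"

lemma matricize_eq_merge_idx: "matricize A J r c = A (merge_idx J r c)"
  by (simp add: matricize_def merge_idx_def)

lemma bij_betw_restrict_tidx:
  "bij_betw (\<lambda>i. restrict i S) (tidx D S) (PiE S (\<lambda>n. {..<D n}))"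
proof (rule bij_betw_byWitness[where f' = "\<lambda>f n. if n \<in> S then f n else 0"])
  show "\<forall>a\<in>tidx D S. (\<lambda>n. if n \<in> S then restrict a S n else 0) = a"
    by (auto simp: tidx_def fun_eq_iff)
  show "\<forall>a'\<in>PiE S (\<lambda>n. {..<D n}). restrict (\<lambda>n. if n \<in> S then a' n else 0) S = a'"
    by (auto simp: fun_eq_iff PiE_def extensional_def)
  show "(\<lambda>i. restrict i S) ` tidx D S \<subseteq> PiE S (\<lambda>n. {..<D n})"
    by (auto simp: tidx_def)
  show "(\<lambda>f n. if n \<in> S then f n else 0) ` PiE S (\<lambda>n. {..<D n}) \<subseteq> tidx D S"
    by (auto simp: tidx_def PiE_def Pi_def)
qed

lemma finite_tidx: "finite S \<Longrightarrow> finite (tidx D S)"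
  using bij_betw_finite[OF bij_betw_restrict_tidx] by (auto intro: finite_PiE)

lemma card_tidx: "finite S \<Longrightarrow> card (tidx D S) = (\<Prod>n\<in>S. D n)"
  using bij_betw_same_card[OF bij_betw_restrict_tidx[of S D]] by (simp add: card_PiE)

lemma bij_betw_merge_idx:
  assumes "J \<subseteq> S"
  shows "bij_betw (\<lambda>(r, c). merge_idx J r c) (tidx D J \<times> tidx D (S - J)) (tidx D S)"
proof (rule bij_betw_byWitness[where f' = "\<lambda>i. (\<lambda>n. if n \<in> J then i n else 0, \<lambda>n. if n \<in> S - J then i n else 0)"])
  show "\<forall>a\<in>tidx D J \<times> tidx D (S - J).
       (\<lambda>i. (\<lambda>n. if n \<in> J then i n else 0, \<lambda>n. if n \<in> S - J then i n else 0)) ((\<lambda>(r, c). merge_idx J r c) a) = a"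
    by (auto simp: tidx_def merge_idx_def fun_eq_iff)
  show "\<forall>a'\<in>tidx D S. (\<lambda>(r, c). merge_idx J r c) (\<lambda>n. if n \<in> J then a' n else 0, \<lambda>n. if n \<in> S - J then a' n else 0) = a'"
    using assms by (auto simp: tidx_def merge_idx_def fun_eq_iff)
  show "(\<lambda>(r, c). merge_idx J r c) ` (tidx D J \<times> tidx D (S - J)) \<subseteq> tidx D S"
    using assms by (auto simp: tidx_def merge_idx_def)
  show "(\<lambda>i. (\<lambda>n. if n \<in> J then i n else 0, \<lambda>n. if n \<in> S - J then i n else 0)) ` tidx D S \<subseteq> tidx D J \<times> tidx D (S - J)"
    using assms by (auto simp: tidx_def)
qed

lemma sum_tidx_merge_idx:
  assumes "J \<subseteq> S" "finite S"
  shows "(\<Sum>i\<in>tidx D S. F i) = (\<Sum>r\<in>tidx D J. \<Sum>c\<in>tidx D (S - J). F (merge_idx J r c))"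
proof -
  have "(\<Sum>i\<in>tidx D S. F i) = (\<Sum>p\<in>tidx D J \<times> tidx D (S - J). F ((\<lambda>(r, c). merge_idx J r c) p))"
    by (rule sum.reindex_bij_betw[OF bij_betw_merge_idx[OF assms(1)], symmetric])
  also have "\<dots> = (\<Sum>r\<in>tidx D J. \<Sum>c\<in>tidx D (S - J). F (merge_idx J r c))"
    unfolding sum.cartesian_product by (intro sum.cong) auto
  finally show ?thesis .
qed

lemma merge_idx_in_tidx:
  "J \<subseteq> S \<Longrightarrow> r \<in> tidx D J \<Longrightarrow> c \<in> tidx D (S - J) \<Longrightarrow> merge_idx J r c \<in> tidx D S"
  using bij_betw_merge_idx[of J S D] by (auto simp: bij_betw_def)

lemma QE_svd:
  assumes "finite J"
  obtains k \<sigma> u v where "is_svd (tidx D J) (tidx D ({1..M} - J)) (matricize A J) k \<sigma> u v"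
    and "QE D M A J = sv_entropy k \<sigma>"
proof -
  have "\<exists>e k \<sigma> u v. is_svd (tidx D J) (tidx D ({1..M} - J)) (matricize A J) k \<sigma> u v \<and> e = sv_entropy k \<sigma>"
    using svd_exists[OF finite_tidx[OF assms] finite_tidx] by blast
  from someI_ex[OF this] show thesis using that unfolding QE_def by blast
qed

lemma QE_nonneg: "finite J \<Longrightarrow> 0 \<le> QE D M A J"
  by (metis QE_svd sv_entropy_nonneg)

lemma fnorm_sq_eq_matricize:
  assumes "J \<subseteq> {1..M}"
  shows "(fnorm D M A)\<^sup>2 = (\<Sum>r\<in>tidx D J. \<Sum>c\<in>tidx D ({1..M} - J). (matricize A J r c)\<^sup>2)"
proof -
  have "(\<Sum>i\<in>tidx D {1..M}. (A i)\<^sup>2) = (\<Sum>r\<in>tidx D J. \<Sum>c\<in>tidx D ({1..M} - J). (A (merge_idx J r c))\<^sup>2)"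
    by (rule sum_tidx_merge_idx[OF assms finite_atLeastAtMost])
  then show ?thesis by (simp add: fnorm_def matricize_eq_merge_idx sum_nonneg)
qed

lemma svd_rank_le_DJ:
  assumes "is_svd (tidx D J) (tidx D ({1..M} - J)) X k \<sigma> u v" "finite J"
  shows "k \<le> DJ D M J"
proof -
  have "k \<le> card (tidx D J)" "k \<le> card (tidx D ({1..M} - J))"
    using assms orthonormal_on_card_le finite_tidx unfolding is_svd_iff by blast+
  then show ?thesis using assms(2) by (simp add: DJ_def card_tidx)
qed

lemma QE_le_of_low_rank_approx:
  fixes A W :: "(nat \<Rightarrow> nat) \<Rightarrow> real" and R M :: nat
  assumes J: "J \<subseteq> {1..M}" and R: "R > 0"
    and low_rank: "\<forall>r\<in>tidx D J. \<forall>c\<in>tidx D ({1..M} - J). matricize W J r c = (\<Sum>i<R. f i r * g i c)"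
    and \<epsilon>: "0 \<le> \<epsilon>" "\<epsilon> \<le> fnorm D M A / 4" and close: "fnorm D M (\<lambda>i. W i - A i) \<le> \<epsilon>"
  shows "QE D M A J \<le> ln (real R) + 2 * \<epsilon> / fnorm D M A * ln (real (DJ D M J))
            + 2 * sqrt (2 * \<epsilon> / fnorm D M A)"
proof -
  define Rw where "Rw = tidx D J"
  define Cl where "Cl = tidx D ({1..M} - J)"
  have finJ: "finite J" using J finite_subset by blast
  have fin: "finite Rw" "finite Cl" unfolding Rw_def Cl_def using finJ by (auto intro: finite_tidx)
  obtain k \<sigma> u v where svd: "is_svd Rw Cl (matricize A J) k \<sigma> u v" and QE: "QE D M A J = sv_entropy k \<sigma>"
    using QE_svd[OF finJ] unfolding Rw_def Cl_def by blast
  define T where "T = (\<Sum>d<k. (\<sigma> d)\<^sup>2)"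
  have nA: "fnorm D M A = sqrt T"
    using fnorm_sq_eq_matricize[OF J, of D A] svd_sum_squares[OF svd fin] unfolding fnorm_def Rw_def Cl_def T_def
    by (simp add: sum_nonneg)
  show ?thesis
  proof (cases "T = 0")
    case True
    then have "\<forall>d<k. (\<sigma> d)\<^sup>2 = 0" unfolding T_def by (subst (asm) sum_nonneg_eq_0_iff) auto
    then have "sv_entropy k \<sigma> = 0" unfolding sv_entropy_def by (simp add: Let_def)
    then show ?thesis using True nA R QE by simp
  next
    case False
    then have Tpos: "T > 0" unfolding T_def by (simp add: order_less_le sum_nonneg)
    define \<delta> where "\<delta> = \<epsilon> / sqrt T"
    obtain cc where cc: "\<forall>d<k. 0 \<le> cc d \<and> cc d \<le> 1" and ccR: "(\<Sum>d<k. cc d) \<le> real R"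
      and tl: "(\<Sum>d<k. (\<sigma> d)\<^sup>2 * (1 - cc d)) \<le> (\<Sum>r\<in>Rw. \<Sum>c\<in>Cl. (matricize A J r c - matricize W J r c)\<^sup>2)"
      using svd_low_rank_tail[OF svd fin] low_rank unfolding Rw_def Cl_def by blast
    have "(\<Sum>r\<in>Rw. \<Sum>c\<in>Cl. (matricize A J r c - matricize W J r c)\<^sup>2) = (fnorm D M (\<lambda>i. W i - A i))\<^sup>2"
      using fnorm_sq_eq_matricize[OF J, of D "\<lambda>i. W i - A i"] unfolding Rw_def Cl_def
      by (simp add: matricize_def power2_commute)
    also have "\<dots> \<le> \<epsilon>\<^sup>2" using close by (intro power_mono) (auto simp: fnorm_def sum_nonneg)
    also have "\<epsilon>\<^sup>2 = \<delta>\<^sup>2 * T" using Tpos by (simp add: \<delta>_def power_divide)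
    finally have tail: "(\<Sum>d<k. (\<sigma> d)\<^sup>2 * (1 - cc d)) \<le> \<delta>\<^sup>2 * (\<Sum>d<k. (\<sigma> d)\<^sup>2)"
      using tl by (simp add: T_def)
    have "real k \<le> real (DJ D M J)"
      using svd_rank_le_DJ[of D J M _ k \<sigma> u v] svd finJ unfolding Rw_def Cl_def by simp
    then have "sv_entropy k \<sigma> \<le> ln (real R) + 2 * \<delta> * ln (real (DJ D M J)) + 2 * sqrt (2 * \<delta>)"
      using Tpos \<epsilon> nA R
      by (intro sv_entropy_le_of_tail[OF Tpos[unfolded T_def] cc ccR _ _ tail]) (auto simp: \<delta>_def divide_le_eq)
    then show ?thesis using nA QE by (simp add: \<delta>_def)
  qed
qed

section \<open>Locality of the tensor network\<close>

text \<open>The axes descending from the m-th node at level j of the tree.\<close>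
definition axis_block :: "nat \<Rightarrow> nat \<Rightarrow> nat \<Rightarrow> nat set" where
  "axis_block P j m = {2^(P*j) * (m - 1) + 1 .. 2^(P*j) * m}"

lemma mem_axis_block_iff:
  assumes "m \<ge> 1"
  shows "x \<in> axis_block P j m \<longleftrightarrow> x \<ge> 1 \<and> (x - 1) div 2^(P*j) = m - 1"
proof -
  define B :: nat where "B = 2^(P*j)"
  have B: "B > 0" by (simp add: B_def)
  have "x \<in> axis_block P j m \<longleftrightarrow> x \<ge> 1 \<and> B * (m - 1) \<le> x - 1 \<and> x - 1 < B * Suc (m - 1)"
    using assms by (auto simp: axis_block_def B_def[symmetric] algebra_simps)
  also have "\<dots> \<longleftrightarrow> x \<ge> 1 \<and> (x - 1) div B = m - 1"
  proof -
    have "B * (m - 1) \<le> x - 1 \<and> x - 1 < B * Suc (m - 1) \<longleftrightarrow> (x - 1) div B = m - 1"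
    proof
      assume "B * (m - 1) \<le> x - 1 \<and> x - 1 < B * Suc (m - 1)"
      then show "(x - 1) div B = m - 1" by (intro div_nat_eqI) auto
    next
      assume h: "(x - 1) div B = m - 1"
      have dm: "x - 1 = B * ((x - 1) div B) + (x - 1) mod B" by simp
      have md: "(x - 1) mod B < B" using B by simp
      have a1: "B * ((x - 1) div B) \<le> x - 1" using dm by linarith
      have a2: "x - 1 < B * ((x - 1) div B) + B" using dm md by linarith
      show "B * (m - 1) \<le> x - 1 \<and> x - 1 < B * Suc (m - 1)" using a1 a2 unfolding h by simp
    qed
    then show ?thesis by blast
  qed
  finally show ?thesis by (simp add: B_def)
qed

lemma card_axis_block: "m \<ge> 1 \<Longrightarrow> card (axis_block P j m) = 2^(P*j)"
  unfolding axis_block_def by (cases m) auto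

lemma axis_block_first: "m0 \<ge> 1 \<Longrightarrow> 2^(P*l0) * (m0 - 1) + 1 \<in> axis_block P l0 m0"
proof -
  assume m0: "m0 \<ge> 1"
  have "2^(P*l0) * m0 = 2^(P*l0) * (m0 - 1) + 2^(P*l0)" using m0 by (cases m0) auto
  moreover have "(1::nat) \<le> 2^(P*l0)" by simp
  ultimately show ?thesis unfolding axis_block_def by auto
qed

lemma two_power_mult_Suc: "(2::nat)^(P * Suc j) = 2^(P*j) * 2^P"
  by (simp add: power_add[symmetric] algebra_simps)

lemma axis_block_child_subset:
  assumes "m \<ge> 1" "k \<in> {1..2^P}"
  shows "axis_block P j (2^P * (m - 1) + k) \<subseteq> axis_block P (Suc j) m"
proof
  fix x assume x: "x \<in> axis_block P j (2^P * (m - 1) + k)"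
  have c1: "2^P * (m - 1) + k \<ge> 1" using assms by simp
  have x1: "x \<ge> 1" and q: "(x - 1) div 2^(P*j) = 2^P * (m - 1) + (k - 1)"
    using x mem_axis_block_iff[OF c1] assms by auto
  have "(x - 1) div 2^(P * Suc j) = ((x - 1) div 2^(P*j)) div 2^P"
    by (simp only: two_power_mult_Suc div_mult2_eq)
  also have "\<dots> = m - 1" unfolding q
  proof (rule div_nat_eqI)
    have "2^P * m = 2^P * (m - 1) + 2^P" using assms by (cases m) auto
    then show "2 ^ P * (m - 1) + (k - 1) < 2 ^ P * Suc (m - 1)" using assms by auto
  qed simp
  finally show "x \<in> axis_block P (Suc j) m" using mem_axis_block_iff[OF assms(1)] x1 by simp
qed

lemma axis_block_children_cover:
  assumes "m \<ge> 1" "x \<in> axis_block P (Suc j) m"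
  shows "\<exists>k\<in>{1..2^P}. x \<in> axis_block P j (2^P * (m - 1) + k)"
proof -
  define q where "q = (x - 1) div 2^(P*j)"
  have x1: "x \<ge> 1" and h: "(x - 1) div 2^(P * Suc j) = m - 1" using assms mem_axis_block_iff by auto
  have "(x - 1) div 2^(P * Suc j) = (x - 1) div 2^(P*j) div 2^P" by (simp only: two_power_mult_Suc div_mult2_eq)
  then have qd: "q div 2^P = m - 1" using h by (simp add: q_def)
  have lo: "2^P * (m - 1) \<le> q" and hi: "q < 2^P * Suc (m - 1)"
  proof -
    have dm: "q = 2^P * (q div 2^P) + q mod 2^P" by simp
    have md: "q mod 2^P < 2^P" by simp
    have a1: "2^P * (q div 2^P) \<le> q" using dm by linarith
    have a2: "q < 2^P * (q div 2^P) + 2^P" using dm md by linarith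
    show "2^P * (m - 1) \<le> q" "q < 2^P * Suc (m - 1)" using a1 a2 unfolding qd by auto
  qed
  define k where "k = q - 2^P * (m - 1) + 1"
  have k: "k \<in> {1..2^P}" using lo hi by (simp add: k_def algebra_simps)
  have c1: "2^P * (m - 1) + k \<ge> 1" using k by simp
  have "q = 2^P * (m - 1) + k - 1" using lo by (simp add: k_def)
  then have "(x - 1) div 2^(P*j) = 2^P * (m - 1) + k - 1" by (simp add: q_def)
  then have "x \<in> axis_block P j (2^P * (m - 1) + k)"
    using x1 mem_axis_block_iff[OF c1] by simp
  then show ?thesis using k by blast
qed

lemma axis_block_disjoint:
  assumes "m \<ge> 1" "m' \<ge> 1" "m \<noteq> m'"
  shows "axis_block P j m \<inter> axis_block P j m' = {}"
  using assms mem_axis_block_iff[OF assms(1)] mem_axis_block_iff[OF assms(2)] by auto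

lemma axis_block_same_div:
  assumes "P * l0 \<le> e" "m0 \<ge> 1" "x \<in> axis_block P l0 m0" "y \<in> axis_block P l0 m0"
  shows "(x - 1) div 2^e = (y - 1) div 2^e"
proof -
  have e: "(2::nat)^e = 2^(P*l0) * 2^(e - P*l0)" using assms(1) by (simp add: power_add[symmetric])
  show ?thesis using assms mem_axis_block_iff[OF assms(2)] by (simp add: e div_mult2_eq)
qed

lemma axis_block_containing:
  assumes x: "x \<in> {1..2^(P*j) * q}"
  obtains m where "m \<in> {1..q}" "x \<in> axis_block P j m" "axis_block P j m \<subseteq> {1..2^(P*j) * q}"
proof
  define m where "m = (x - 1) div 2^(P*j) + 1"
  show "x \<in> axis_block P j m" using x by (subst mem_axis_block_iff) (auto simp: m_def)
  have "(x - 1) div 2^(P*j) < q" using x by (auto simp: div_less_iff_less_mult mult.commute)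
  then show m: "m \<in> {1..q}" by (simp add: m_def)
  show "axis_block P j m \<subseteq> {1..2^(P*j) * q}"
    using m by (auto simp: axis_block_def intro: order_trans[OF _ mult_le_mono2])
qed

lemma tn_phi_cong_axis_block:
  assumes "m \<ge> 1" "\<forall>x\<in>axis_block P j m. idx x = idx' x"
  shows "tn_phi P R phi0 a j m r idx = tn_phi P R phi0 a j m r idx'"
  using assms
proof (induction j arbitrary: m r)
  case 0
  then show ?case by (simp add: axis_block_def)
next
  case (Suc j)
  have "tn_phi P R phi0 a j (2^P * (m - 1) + k) rr idx = tn_phi P R phi0 a j (2^P * (m - 1) + k) rr idx'"
    if k: "k \<in> {1..2^P}" for k rr
  proof -
    show "tn_phi P R phi0 a j (2^P * (m - 1) + k) rr idx = tn_phi P R phi0 a j (2^P * (m - 1) + k) rr idx'"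
      using Suc.IH[of "2^P * (m - 1) + k"] axis_block_child_subset[OF Suc.prems(1) k, of j] Suc.prems k by auto
  qed
  then show ?case
    by (simp only: tn_phi.simps) (intro sum.cong refl arg_cong[where f="\<lambda>x. _ * x"] prod.cong, auto)
qed

definition indep_axes :: "nat set \<Rightarrow> ((nat \<Rightarrow> nat) \<Rightarrow> real) \<Rightarrow> bool" where
  "indep_axes J F \<longleftrightarrow> (\<forall>i i'. (\<forall>x. x \<notin> J \<longrightarrow> i x = i' x) \<longrightarrow> F i = F i')"

lemma indep_axes_const: "indep_axes J (\<lambda>_. c)" by (simp add: indep_axes_def)

lemma indep_axes_mult: "indep_axes J F \<Longrightarrow> indep_axes J G \<Longrightarrow> indep_axes J (\<lambda>i. F i * G i)"
  unfolding indep_axes_def by metis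

lemma indep_axes_sum: "(\<And>s. s \<in> S \<Longrightarrow> indep_axes J (F s)) \<Longrightarrow> indep_axes J (\<lambda>i. \<Sum>s\<in>S. F s i)"
  unfolding indep_axes_def by (metis (mono_tags, lifting) sum.cong)

lemma indep_axes_prod: "(\<And>s. s \<in> S \<Longrightarrow> indep_axes J (F s)) \<Longrightarrow> indep_axes J (\<lambda>i. \<Prod>s\<in>S. F s i)"
  unfolding indep_axes_def by (metis (mono_tags, lifting) prod.cong)

lemma tn_phi_indep_axes:
  assumes "m \<ge> 1" "J \<inter> axis_block P j m = {}"
  shows "indep_axes J (tn_phi P R phi0 a j m r)"
  unfolding indep_axes_def using tn_phi_cong_axis_block[OF assms(1)] assms(2) by blast

text \<open>A decomposition of F as a sum of R products of the functions \<phi> r with functions independent of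
  the axes in J; matricized along J, such an F has rank at most R.\<close>
definition separable :: "nat set \<Rightarrow> nat \<Rightarrow> (nat \<Rightarrow> (nat \<Rightarrow> nat) \<Rightarrow> real) \<Rightarrow> ((nat \<Rightarrow> nat) \<Rightarrow> real) \<Rightarrow> bool" where
  "separable J R \<phi> F \<longleftrightarrow> (\<exists>g. (\<forall>r. indep_axes J (g r)) \<and> (\<forall>idx. F idx = (\<Sum>r\<in>{1..R}. \<phi> r idx * g r idx)))"

lemma separable_mult: "separable J R \<phi> F \<Longrightarrow> indep_axes J H \<Longrightarrow> separable J R \<phi> (\<lambda>i. F i * H i)"
proof -
  assume f: "separable J R \<phi> F" and h: "indep_axes J H"
  then obtain g where g: "\<forall>r. indep_axes J (g r)" "\<forall>idx. F idx = (\<Sum>r\<in>{1..R}. \<phi> r idx * g r idx)"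
    unfolding separable_def by blast
  show ?thesis unfolding separable_def
    by (rule exI[of _ "\<lambda>r i. g r i * H i"]) (use g h in \<open>auto intro: indep_axes_mult simp: sum_distrib_right sum_distrib_left algebra_simps\<close>)
qed

lemma separable_sum:
  assumes "\<And>s. s \<in> S \<Longrightarrow> separable J R \<phi> (F s)"
  shows "separable J R \<phi> (\<lambda>i. \<Sum>s\<in>S. F s i)"
proof -
  have "\<forall>s\<in>S. \<exists>g. (\<forall>r. indep_axes J (g r)) \<and> (\<forall>idx. F s idx = (\<Sum>r\<in>{1..R}. \<phi> r idx * g r idx))"
    using assms unfolding separable_def by blast
  then obtain G where G: "\<forall>s\<in>S. (\<forall>r. indep_axes J (G s r)) \<and> (\<forall>idx. F s idx = (\<Sum>r\<in>{1..R}. \<phi> r idx * G s r idx))"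
    by metis
  have "(\<Sum>s\<in>S. F s idx) = (\<Sum>r\<in>{1..R}. \<phi> r idx * (\<Sum>s\<in>S. G s r idx))" for idx
  proof -
    have "(\<Sum>s\<in>S. F s idx) = (\<Sum>s\<in>S. \<Sum>r\<in>{1..R}. \<phi> r idx * G s r idx)" using G by simp
    also have "\<dots> = (\<Sum>r\<in>{1..R}. \<phi> r idx * (\<Sum>s\<in>S. G s r idx))"
      by (subst sum.swap) (simp add: sum_distrib_left)
    finally show ?thesis .
  qed
  moreover have "\<forall>r. indep_axes J (\<lambda>i. \<Sum>s\<in>S. G s r i)" using G by (auto intro: indep_axes_sum)
  ultimately show ?thesis unfolding separable_def by (intro exI[of _ "\<lambda>r i. \<Sum>s\<in>S. G s r i"]) auto
qed

lemma separable_basis: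
  assumes "r \<in> {1..R}" shows "separable J R \<phi> (\<phi> r)"
  unfolding separable_def
  by (rule exI[of _ "\<lambda>r' _. if r' = r then 1 else 0"]) (use assms in \<open>auto simp: indep_axes_def mult_delta_right\<close>)

lemma separable_tn_step:
  assumes l0j: "l0 \<le> j" and m: "m \<ge> 1" and m0: "m0 \<ge> 1" and J: "J = axis_block P l0 m0"
    and Jsub: "J \<subseteq> axis_block P (Suc j) m"
    and IH: "\<forall>c\<ge>1. \<forall>r\<in>{1..R}. J \<subseteq> axis_block P j c \<longrightarrow> separable J R \<phi> (tn_phi P R phi0 a j c r)"
  shows "separable J R \<phi> (\<lambda>idx. \<Sum>ik\<in>PiE {1..2^P} (\<lambda>_. {1..R}).
            cf ik * (\<Prod>k\<in>{1..2^P}. tn_phi P R phi0 a j (2^P * (m - 1) + k) (ik k) idx))"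
proof -
  \<comment> \<open>Exactly one child block contains J; the factors of all other children do not depend on J.\<close>
  define x0 where "x0 = 2^(P*l0) * (m0 - 1) + 1"
  have x0J: "x0 \<in> J" unfolding J x0_def using axis_block_first[OF m0] .
  obtain k0 where k0: "k0 \<in> {1..2^P}" and x0k0: "x0 \<in> axis_block P j (2^P * (m - 1) + k0)"
    using axis_block_children_cover[OF m] x0J Jsub by blast
  have dich: "J \<subseteq> axis_block P j c" if c: "c \<ge> 1" "x0 \<in> axis_block P j c" for c
  proof
    fix y assume y: "y \<in> J"
    have "(y - 1) div 2^(P*j) = (x0 - 1) div 2^(P*j)"
      using axis_block_same_div[OF mult_le_mono2[OF l0j] m0] y x0J J by blast
    moreover have "y \<ge> 1" using y J mem_axis_block_iff[OF m0] by auto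
    ultimately show "y \<in> axis_block P j c" using c mem_axis_block_iff[OF c(1)] by simp
  qed
  have Jk0: "J \<subseteq> axis_block P j (2^P * (m - 1) + k0)" using dich x0k0 k0 by simp
  have Jdisj: "J \<inter> axis_block P j (2^P * (m - 1) + k) = {}" if k: "k \<in> {1..2^P}" "k \<noteq> k0" for k
  proof -
    have "axis_block P j (2^P * (m - 1) + k0) \<inter> axis_block P j (2^P * (m - 1) + k) = {}"
      using k k0 by (intro axis_block_disjoint) auto
    then show ?thesis using Jk0 by blast
  qed
  show ?thesis
  proof (rule separable_sum)
    fix ik :: "nat \<Rightarrow> nat" assume ik: "ik \<in> PiE {1..2^P} (\<lambda>_. {1..R})"
    have eq: "(\<lambda>idx. cf ik * (\<Prod>k\<in>{1..2^P}. tn_phi P R phi0 a j (2^P * (m - 1) + k) (ik k) idx))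
       = (\<lambda>idx. tn_phi P R phi0 a j (2^P * (m - 1) + k0) (ik k0) idx *
           (cf ik * (\<Prod>k\<in>{1..2^P} - {k0}. tn_phi P R phi0 a j (2^P * (m - 1) + k) (ik k) idx)))"
      using k0 by (auto simp: prod.remove fun_eq_iff)
    have f1: "separable J R \<phi> (tn_phi P R phi0 a j (2^P * (m - 1) + k0) (ik k0))"
    proof -
      have "ik k0 \<in> {1..R}" using ik k0 by (auto simp: PiE_def Pi_def)
      moreover have "2^P * (m - 1) + k0 \<ge> 1" using k0 by simp
      ultimately show ?thesis using IH Jk0 by blast
    qed
    have f2: "indep_axes J (\<lambda>idx. cf ik * (\<Prod>k\<in>{1..2^P} - {k0}. tn_phi P R phi0 a j (2^P * (m - 1) + k) (ik k) idx))"
      by (intro indep_axes_mult indep_axes_const indep_axes_prod tn_phi_indep_axes Jdisj) auto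
    show "separable J R \<phi> (\<lambda>idx. cf ik * (\<Prod>k\<in>{1..2^P}. tn_phi P R phi0 a j (2^P * (m - 1) + k) (ik k) idx))"
      unfolding eq by (rule separable_mult[OF f1 f2])
  qed
qed

lemma separable_tn_phi:
  assumes m0: "m0 \<ge> 1" and J: "J = axis_block P l0 m0"
  shows "\<forall>c\<ge>1. \<forall>r\<in>{1..R}. J \<subseteq> axis_block P (l0 + s) c \<longrightarrow> separable J R (tn_phi P R phi0 a l0 m0) (tn_phi P R phi0 a (l0 + s) c r)"
proof (induction s)
  case 0
  show ?case
  proof (intro allI impI ballI)
    fix c r assume c: "c \<ge> 1" and r: "r \<in> {1..R}" and sub: "J \<subseteq> axis_block P (l0 + 0) c"
    have "2^(P*l0) * (m0 - 1) + 1 \<in> J" unfolding J using axis_block_first[OF m0] .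
    then have "c = m0" using sub axis_block_disjoint[OF c m0, of P l0] J by auto
    then show "separable J R (tn_phi P R phi0 a l0 m0) (tn_phi P R phi0 a (l0 + 0) c r)"
      using separable_basis[OF r] by simp
  qed
next
  case (Suc s)
  show ?case
  proof (intro allI impI ballI)
    fix c r assume c: "c \<ge> 1" and r: "r \<in> {1..R}" and sub: "J \<subseteq> axis_block P (l0 + Suc s) c"
    have e: "tn_phi P R phi0 a (l0 + Suc s) c r = (\<lambda>idx. \<Sum>ik\<in>PiE {1..2^P} (\<lambda>_. {1..R}).
            a (Suc (l0 + s)) c r ik * (\<Prod>k\<in>{1..2^P}. tn_phi P R phi0 a (l0 + s) (2^P * (c - 1) + k) (ik k) idx))"
      by (simp add: fun_eq_iff)
    show "separable J R (tn_phi P R phi0 a l0 m0) (tn_phi P R phi0 a (l0 + Suc s) c r)"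
      unfolding e by (rule separable_tn_step[OF _ c m0 J _ Suc.IH]) (use sub in auto)
  qed
qed

lemma tn_matricize_low_rank:
  fixes W :: "(nat \<Rightarrow> nat) \<Rightarrow> real"
  assumes l0: "l0 < L" and m0: "m0 \<ge> 1" and J: "J = axis_block P l0 m0" and JM: "J \<subseteq> {1..(2^L)^P}"
    and gen: "tn_generated P L R D W"
  shows "\<exists>f g. \<forall>r\<in>tidx D J. \<forall>c\<in>tidx D ({1..(2^L)^P} - J). matricize W J r c = (\<Sum>i<R. f i r * g i c)"
proof -
  obtain phi0 a atop where W: "\<forall>idx\<in>tidx D {1..(2^L)^P}. W idx = tn_tensor P L R phi0 a atop idx"
    using gen unfolding tn_generated_def by blast
  define \<phi> where "\<phi> = tn_phi P R phi0 a l0 m0"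
  have IH: "\<forall>c\<ge>1. \<forall>r\<in>{1..R}. J \<subseteq> axis_block P (L - 1) c \<longrightarrow> separable J R \<phi> (tn_phi P R phi0 a (L - 1) c r)"
    using separable_tn_phi[OF m0 J, of R "L - 1 - l0" phi0 a] l0 unfolding \<phi>_def by simp
  have blkL: "axis_block P (Suc (L - 1)) 1 = {1..(2^L)^P}"
    using l0 by (simp add: axis_block_def power_mult[symmetric] mult.commute)
  have tt: "tn_tensor P L R phi0 a atop = (\<lambda>idx. \<Sum>ik\<in>PiE {1..2^P} (\<lambda>_. {1..R}).
            atop ik * (\<Prod>k\<in>{1..2^P}. tn_phi P R phi0 a (L - 1) (2^P * (1 - 1) + k) (ik k) idx))"
    by (simp add: fun_eq_iff tn_tensor_def)
  have "separable J R \<phi> (tn_tensor P L R phi0 a atop)"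
    unfolding tt by (rule separable_tn_step[OF _ _ m0 J _ IH]) (use l0 JM blkL in auto)
  then obtain g where g: "\<forall>r. indep_axes J (g r)" and fe: "\<forall>idx. tn_tensor P L R phi0 a atop idx = (\<Sum>r\<in>{1..R}. \<phi> r idx * g r idx)"
    unfolding separable_def by blast
  have "\<forall>r\<in>tidx D J. \<forall>c\<in>tidx D ({1..(2^L)^P} - J). matricize W J r c = (\<Sum>i<R. \<phi> (Suc i) r * g (Suc i) c)"
  proof (intro ballI)
    fix r c assume r: "r \<in> tidx D J" and c: "c \<in> tidx D ({1..(2^L)^P} - J)"
    have mi: "merge_idx J r c \<in> tidx D {1..(2^L)^P}" by (rule merge_idx_in_tidx[OF JM r c])
    have p: "\<phi> r' (merge_idx J r c) = \<phi> r' r" for r'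
      unfolding \<phi>_def by (rule tn_phi_cong_axis_block[OF m0]) (auto simp: merge_idx_def J)
    have q: "g r' (merge_idx J r c) = g r' c" for r'
      using g unfolding indep_axes_def by (auto simp: merge_idx_def)
    have "matricize W J r c = (\<Sum>r'\<in>{1..R}. \<phi> r' r * g r' c)"
      unfolding matricize_eq_merge_idx using W mi fe p q by simp
    then show "matricize W J r c = (\<Sum>i<R. \<phi> (Suc i) r * g (Suc i) c)"
      using sum.atLeast1_atMost_eq[of "\<lambda>r'. \<phi> r' r * g r' c" R] by simp
  qed
  then show ?thesis by (intro exI[of _ "\<lambda>i. \<phi> (Suc i)"] exI[of _ "\<lambda>i. g (Suc i)"])
qed

lemma matricize_all_axes_low_rank:
  fixes W :: "(nat \<Rightarrow> nat) \<Rightarrow> real" and R :: nat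
  assumes R: "R > 0"
  shows "\<exists>f g. \<forall>r\<in>tidx D {1..M}. \<forall>c\<in>tidx D ({1..M} - {1..M}). matricize W {1..M} r c = (\<Sum>i<R. f i r * g i c)"
proof -
  define f where "f (i::nat) r = (if i = 0 then matricize W {1..M} r (\<lambda>_. 0) else 0)" for i r
  have "\<forall>r\<in>tidx D {1..M}. \<forall>c\<in>tidx D ({1..M} - {1..M}). matricize W {1..M} r c = (\<Sum>i<R. f i r * 1)"
  proof (intro ballI)
    fix r c assume c: "c \<in> tidx D ({1..M} - {1..M})"
    then have "c = (\<lambda>_. 0)" by (auto simp: tidx_def fun_eq_iff)
    moreover have "(\<Sum>i<R. f i r * 1) = f 0 r"
      using R by (subst sum.remove[of _ 0]) (auto simp: f_def)
    ultimately show "matricize W {1..M} r c = (\<Sum>i<R. f i r * 1)" by (simp add: f_def)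
  qed
  then show ?thesis by (intro exI[of _ f] exI[of _ "\<lambda>_ _. 1"]) simp
qed

lemma tn_matricize_axis_block_low_rank:
  fixes W :: "(nat \<Rightarrow> nat) \<Rightarrow> real"
  assumes R: "R > 0" and gen: "tn_generated P L R D W" and j: "j \<le> L" and m: "m \<ge> 1"
    and J: "J = axis_block P j m" and JM: "J \<subseteq> {1..(2^L)^P}"
  shows "\<exists>f g. \<forall>r\<in>tidx D J. \<forall>c\<in>tidx D ({1..(2^L)^P} - J). matricize W J r c = (\<Sum>i<R. f i r * g i c)"
proof (cases "j < L")
  case True
  then show ?thesis using tn_matricize_low_rank[OF _ m J JM gen] by blast
next
  case False
  then have "j = L" using j by simp
  \<comment> \<open>At the root the only block inside the axis range is the whole range.\<close>
  have "m = 1"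
  proof (rule ccontr)
    assume "m \<noteq> 1"
    then have "2^(P*L) * m \<ge> 2^(P*L) * 2" using m by (intro mult_le_mono2) auto
    moreover have "2^(P*L) * m \<in> J" using m \<open>j = L\<close> unfolding J axis_block_def by (cases m) auto
    ultimately show False using JM \<open>j = L\<close> by (auto simp: power_mult[symmetric] mult.commute)
  qed
  then have "J = {1..(2^L)^P}" using \<open>j = L\<close> by (simp add: J axis_block_def power_mult[symmetric] mult.commute)
  then show ?thesis using matricize_all_axes_low_rank[OF R, of D "(2^L)^P" W] by simp
qed

section \<open>Canonical partitions\<close>

lemma canon_K_eq_cubic_block: "canon_K P L l n = cubic_block P (2^(L-l)) n"
  by (simp add: canon_K_def cubic_block_def)

lemma card_cubic_block:
  assumes "\<forall>p\<in>{1..P}. k p \<ge> 1"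
  shows "card (cubic_block P s k) = s ^ P"
proof -
  have "card (cubic_block P s k) = (\<Prod>p\<in>{1..P}. card {s * (k p - 1) + 1 .. s * k p})"
    unfolding cubic_block_def by (simp add: card_PiE)
  also have "\<dots> = (\<Prod>p\<in>{1..P}. s)"
  proof (rule prod.cong[OF refl])
    fix p assume "p \<in> {1..P}"
    then have "k p \<ge> 1" using assms by blast
    then show "card {s * (k p - 1) + 1 .. s * k p} = s" by (cases "k p") (auto simp: algebra_simps)
  qed
  finally show ?thesis by simp
qed

lemma cubic_block_eq:
  assumes P: "P > 0" and t: "t > 0" and card: "card (cubic_block P s k) = t ^ P"
    and n: "\<forall>p\<in>{1..P}. n p \<ge> 1"
    and corner: "restrict (\<lambda>p. t * (n p - 1) + 1) {1..P} \<in> cubic_block P s k"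
  shows "cubic_block P s k = cubic_block P t n"
proof -
  have k: "\<forall>p\<in>{1..P}. k p \<ge> 1"
  proof (rule ccontr)
    assume "\<not> (\<forall>p\<in>{1..P}. k p \<ge> 1)"
    then obtain p where "p \<in> {1..P}" "k p = 0" by auto
    then have "cubic_block P s k = {}" unfolding cubic_block_def by (auto simp: PiE_eq_empty_iff)
    then show False using card t by simp
  qed
  then have "s ^ P = t ^ P" using card card_cubic_block by metis
  then have s: "s = t" using P by (simp add: power_eq_imp_eq_base)
  have "n p = k p" if p: "p \<in> {1..P}" for p
  proof -
    have "t * (n p - 1) + 1 \<in> {t * (k p - 1) + 1 .. t * k p}"
      using corner p unfolding cubic_block_def s by (auto simp: PiE_def Pi_def)
    then have "t * (k p - 1) \<le> t * (n p - 1)" "t * (n p - 1) < t * k p"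
      unfolding atLeastAtMost_iff by linarith+
    then have "k p - 1 \<le> n p - 1" "n p - 1 < k p"
      using t mult_le_cancel1[of t] mult_less_cancel1[of t] by simp_all
    then show ?thesis using n k p by force
  qed
  then show ?thesis unfolding cubic_block_def s by (intro PiE_cong) auto
qed

lemma canon_K_subset_cube:
  assumes "l \<le> L" "n \<in> PiE {1..P} (\<lambda>_. {1..2^l})"
  shows "canon_K P L l n \<subseteq> cube (2^L) P"
proof
  fix y assume y: "y \<in> canon_K P L l n"
  have "y p \<in> {1..2^L}" if p: "p \<in> {1..P}" for p
  proof -
    have "y p \<in> {2^(L-l) * (n p - 1) + 1 .. 2^(L-l) * n p}"
      using PiE_mem[OF y[unfolded canon_K_def] p] .
    then have "y p \<le> 2^(L-l) * n p" "1 \<le> y p" by auto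
    moreover have "2^(L-l) * n p \<le> 2^(L-l) * (2::nat)^l" using assms(2) p by (intro mult_le_mono2) auto
    ultimately show ?thesis using assms(1) by (simp add: power_add[symmetric])
  qed
  then show "y \<in> cube (2^L) P" using y unfolding cube_def canon_K_def by (auto simp: PiE_def Pi_def)
qed

lemma canon_K_image_axis_block:
  assumes P: "P > 0" and comp: "compatible P L \<mu>" and l: "l \<le> L"
    and n: "n \<in> PiE {1..P} (\<lambda>_. {1..2^l})"
  obtains m where "m \<in> {1..2^(P*l)}" "\<mu> ` canon_K P L l n = axis_block P (L - l) m"
    "axis_block P (L - l) m \<subseteq> {1..(2^L)^P}"
proof -
  define j where "j = L - l"
  have M: "((2::nat)^L)^P = 2^(P*j) * 2^(P*l)"
    using l by (simp add: j_def power_mult[symmetric] power_add[symmetric] algebra_simps)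
  have bij: "bij_betw \<mu> (cube (2^L) P) {1..(2^L)^P}" using comp unfolding compatible_def by blast
  have n1: "\<forall>p\<in>{1..P}. n p \<ge> 1" using n by (auto simp: PiE_def Pi_def)
  \<comment> \<open>The corner of the cube K determines the tree node whose axis block is the image of K.\<close>
  define x0 where "x0 = restrict (\<lambda>p. 2^j * (n p - 1) + 1) {1..P}"
  have x0K: "x0 \<in> canon_K P L l n"
    unfolding x0_def canon_K_eq_cubic_block cubic_block_def j_def[symmetric]
  proof (rule restrict_PiE_iff[THEN iffD2], intro ballI)
    fix p assume "p \<in> {1..P}"
    then have "n p \<ge> 1" using n1 by blast
    then have "2^j * n p = 2^j * (n p - 1) + 2^j" by (cases "n p") auto
    then show "2^j * (n p - 1) + 1 \<in> {2^j * (n p - 1) + 1 .. 2^j * n p}" by simp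
  qed
  then have "x0 \<in> cube (2^L) P" using canon_K_subset_cube[OF l n] by blast
  then have "\<mu> x0 \<in> {1..2^(P*j) * 2^(P*l)}" using bij unfolding M[symmetric] by (auto simp: bij_betw_def)
  then obtain m where m: "m \<in> {1..2^(P*l)}" and x0m: "\<mu> x0 \<in> axis_block P j m"
    and mM: "axis_block P j m \<subseteq> {1..(2^L)^P}"
    unfolding M by (rule axis_block_containing)
  define Pre where "Pre = {x\<in>cube (2^L) P. \<mu> x \<in> axis_block P j m}"
  have "j \<in> {0..L}" "m \<in> {1..2^(P*(L-j))}" using m l by (auto simp: j_def)
  then obtain s k where Pre: "Pre = cubic_block P s k"
    using comp unfolding compatible_def Pre_def axis_block_def by blast
  have img: "\<mu> ` Pre = axis_block P j m"
  proof
    show "axis_block P j m \<subseteq> \<mu> ` Pre"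
      using mM bij unfolding Pre_def bij_betw_def by (auto simp: image_iff)
  qed (auto simp: Pre_def)
  have "inj_on \<mu> Pre" using bij unfolding bij_betw_def Pre_def by (auto intro: inj_on_subset)
  then have "card Pre = card (axis_block P j m)" using card_image img by metis
  then have "card Pre = (2^j)^P" using card_axis_block m by (simp add: power_mult[symmetric] mult.commute)
  then have "Pre = canon_K P L l n"
    unfolding Pre canon_K_eq_cubic_block j_def[symmetric]
    using x0K x0m P n1 by (intro cubic_block_eq) (auto simp: x0_def Pre[symmetric] Pre_def canon_K_subset_cube[OF l n, THEN subsetD])
  then show thesis using that m img mM by (simp add: j_def)
qed

lemma QE_canonical_upper_bound:
  fixes W A :: "(nat \<Rightarrow> nat) \<Rightarrow> real"
  assumes P: "P > 0" and R: "R > 0" and gen: "tn_generated P L R D W" and comp: "compatible P L \<mu>"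
    and l: "l \<le> L" and n: "n \<in> PiE {1..P} (\<lambda>_. {1..2^l})"
    and \<epsilon>: "0 \<le> \<epsilon>" "\<epsilon> \<le> fnorm D ((2^L)^P) A / 4" and close: "fnorm D ((2^L)^P) (\<lambda>i. W i - A i) \<le> \<epsilon>"
  shows "QE D ((2^L)^P) A (\<mu> ` canon_K P L l n)
           \<le> ln (real R) + 2 * \<epsilon> / fnorm D ((2^L)^P) A * ln (real (DJ D ((2^L)^P) (\<mu> ` canon_K P L l n)))
             + 2 * sqrt (2 * \<epsilon> / fnorm D ((2^L)^P) A)"
proof -
  obtain m where m: "m \<in> {1..2^(P*l)}" and J: "\<mu> ` canon_K P L l n = axis_block P (L - l) m"
    and JM: "axis_block P (L - l) m \<subseteq> {1..(2^L)^P}"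
    using canon_K_image_axis_block[OF P comp l n] by blast
  have JM': "\<mu> ` canon_K P L l n \<subseteq> {1..(2^L)^P}" using J JM by simp
  obtain f g where "\<forall>r\<in>tidx D (\<mu> ` canon_K P L l n). \<forall>c\<in>tidx D ({1..(2^L)^P} - \<mu> ` canon_K P L l n).
      matricize W (\<mu> ` canon_K P L l n) r c = (\<Sum>i<R. f i r * g i c)"
    using tn_matricize_axis_block_low_rank[OF R gen _ _ J JM'] m by auto
  then show ?thesis using QE_le_of_low_rank_approx[OF JM' R _ \<epsilon> close] by blast
qed

section \<open>A tensor with maximal entanglement across all canonical partitions\<close>

text \<open>Identifies the axes x and \<pi> x pairwise through a maximally entangled state of dimension d
  (entries of index d or more vanish).\<close>
definition paired_tensor :: "nat \<Rightarrow> (nat \<Rightarrow> nat) \<Rightarrow> nat \<Rightarrow> (nat \<Rightarrow> nat) \<Rightarrow> real" where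
  "paired_tensor M \<pi> d i = (if \<forall>x\<in>{1..M}. i x < d \<and> i x = i (\<pi> x) then 1 else 0)"

locale axis_pairing =
  fixes M :: nat and \<pi> :: "nat \<Rightarrow> nat" and J :: "nat set" and d :: nat and D :: "nat \<Rightarrow> nat"
  assumes J_sub: "J \<subseteq> {1..M}"
    and \<pi>_range: "\<forall>x\<in>{1..M}. \<pi> x \<in> {1..M}" and \<pi>_inv: "\<forall>x\<in>{1..M}. \<pi> (\<pi> x) = x"
    and \<pi>_J: "\<forall>x\<in>J. \<pi> x \<notin> J"
    and d_pos: "d \<ge> 1" and d_le: "\<forall>x\<in>{1..M}. d \<le> D x"
begin

definition paired :: "(nat \<Rightarrow> nat) \<Rightarrow> (nat \<Rightarrow> nat) \<Rightarrow> bool" where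
  "paired r c \<longleftrightarrow> (\<forall>x\<in>{1..M}. merge_idx J r c x < d \<and> merge_idx J r c x = merge_idx J r c (\<pi> x))"

lemma matricize_paired_tensor:
  "matricize (paired_tensor M \<pi> d) J r c = (if paired r c then 1 else 0)"
  by (simp add: matricize_eq_merge_idx paired_tensor_def paired_def)

lemma mem_\<pi>_image_J: "x \<in> {1..M} \<Longrightarrow> x \<in> \<pi> ` J \<longleftrightarrow> \<pi> x \<in> J"
  using \<pi>_inv J_sub by (force simp: image_iff)

lemma paired_row_small:
  assumes r: "r \<in> tidx D J" and rc: "paired r c"
  shows "r \<in> tidx (\<lambda>_. d) J"
proof -
  have "r x < d" if x: "x \<in> J" for x
  proof -
    have "x \<in> {1..M}" using x J_sub by blast
    then have "merge_idx J r c x < d" using rc unfolding paired_def by blast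
    then show ?thesis using x by (simp add: merge_idx_def)
  qed
  then show ?thesis using r by (simp add: tidx_def)
qed

lemma paired_row_eq:
  assumes rc: "paired r c" and x: "x \<in> J"
  shows "r x = c (\<pi> x)"
proof -
  have "x \<in> {1..M}" using x J_sub by blast
  then have "merge_idx J r c x = merge_idx J r c (\<pi> x)" using rc unfolding paired_def by blast
  then show ?thesis using x \<pi>_J by (simp add: merge_idx_def)
qed

lemma paired_row_unique:
  assumes "r \<in> tidx D J" "r' \<in> tidx D J" "paired r c" "paired r' c"
  shows "r = r'"
proof
  fix x show "r x = r' x"
    using assms paired_row_eq[of r c x] paired_row_eq[of r' c x] by (cases "x \<in> J") (simp_all add: tidx_def)
qed

definition transfer :: "(nat \<Rightarrow> nat) \<Rightarrow> (nat \<Rightarrow> nat) \<Rightarrow> nat \<Rightarrow> nat" where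
  "transfer r' c = (\<lambda>x. if x \<in> \<pi> ` J then r' (\<pi> x) else c x)"

lemma transfer_in_tidx:
  assumes r': "r' \<in> tidx (\<lambda>_. d) J" and c: "c \<in> tidx D ({1..M} - J)"
  shows "transfer r' c \<in> tidx D ({1..M} - J)"
proof -
  have "\<pi> ` J \<subseteq> {1..M} - J" using \<pi>_range \<pi>_J J_sub by auto
  moreover have "\<pi> x \<in> J \<Longrightarrow> x \<in> {1..M} \<Longrightarrow> r' (\<pi> x) < D x" for x
    using r' d_le by (fastforce simp: tidx_def)
  ultimately show ?thesis using c by (auto simp: tidx_def transfer_def mem_\<pi>_image_J)
qed

lemma transfer_paired:
  assumes r': "r' \<in> tidx (\<lambda>_. d) J" and rc: "paired r c"
  shows "paired r' (transfer r' c)"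
  unfolding paired_def
proof
  fix x assume x: "x \<in> {1..M}"
  have \<pi>x: "\<pi> x \<in> {1..M}" "\<pi> (\<pi> x) = x" using x \<pi>_range \<pi>_inv by auto
  have r'd: "y \<in> J \<Longrightarrow> r' y < d" for y using r' by (auto simp: tidx_def)
  let ?i = "merge_idx J r c" and ?i' = "merge_idx J r' (transfer r' c)"
  consider "x \<in> J" | "\<pi> x \<in> J" | "x \<notin> J" "\<pi> x \<notin> J" by blast
  then show "?i' x < d \<and> ?i' x = ?i' (\<pi> x)"
  proof cases
    case 1
    then show ?thesis using \<pi>_J \<pi>x r'd mem_\<pi>_image_J[OF \<pi>x(1)] by (simp add: merge_idx_def transfer_def)
  next
    case 2
    then have "x \<notin> J" using \<pi>_J \<pi>x by force
    then show ?thesis using 2 \<pi>x r'd mem_\<pi>_image_J[OF x] by (simp add: merge_idx_def transfer_def)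
  next
    case 3
    then have "?i' x = ?i x" "?i' (\<pi> x) = ?i (\<pi> x)"
      using \<pi>x x mem_\<pi>_image_J[OF x] mem_\<pi>_image_J[OF \<pi>x(1)] by (simp_all add: merge_idx_def transfer_def)
    moreover have "?i x < d" "?i x = ?i (\<pi> x)" using rc x unfolding paired_def by blast+
    ultimately show ?thesis by metis
  qed
qed

lemma transfer_transfer: "paired r c \<Longrightarrow> transfer r (transfer r' c) = c"
  using J_sub \<pi>_inv by (auto simp: transfer_def fun_eq_iff paired_row_eq)

lemma card_paired_columns:
  assumes r: "r \<in> tidx (\<lambda>_. d) J" and r': "r' \<in> tidx (\<lambda>_. d) J"
  shows "card {c\<in>tidx D ({1..M} - J). paired r c} = card {c\<in>tidx D ({1..M} - J). paired r' c}"
proof (rule bij_betw_same_card[of "transfer r'"], rule bij_betw_byWitness[where f' = "transfer r"])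
  show "transfer r' ` {c\<in>tidx D ({1..M} - J). paired r c} \<subseteq> {c\<in>tidx D ({1..M} - J). paired r' c}"
    using transfer_in_tidx[OF r'] transfer_paired[OF r'] by blast
  show "transfer r ` {c\<in>tidx D ({1..M} - J). paired r' c} \<subseteq> {c\<in>tidx D ({1..M} - J). paired r c}"
    using transfer_in_tidx[OF r] transfer_paired[OF r] by blast
qed (use transfer_transfer in blast)+

lemma sv_entropy_ge:
  assumes svd: "is_svd (tidx D J) (tidx D ({1..M} - J)) (matricize (paired_tensor M \<pi> d) J) k \<sigma> u v"
  shows "real (card J) * ln (real d) \<le> sv_entropy k \<sigma>"
proof -
  define V where "V = tidx (\<lambda>_. d) J"
  define z :: "nat \<Rightarrow> nat" where "z = (\<lambda>_. 0)"
  have finJ: "finite J" using J_sub finite_subset by blast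
  have V: "V \<subseteq> tidx D J" unfolding V_def tidx_def using d_le J_sub by force
  have zV: "z \<in> V" using d_pos by (simp add: V_def tidx_def z_def)
  have "z \<in> {c\<in>tidx D ({1..M} - J). paired z c}"
    using d_pos d_le by (auto simp: tidx_def z_def paired_def merge_idx_def)
  then have \<beta>: "card {c\<in>tidx D ({1..M} - J). paired z c} \<ge> 1"
    using finite_tidx[of "{1..M} - J" D] by (auto simp: Suc_le_eq card_gt_0_iff)
  have "ln (real (card V)) \<le> sv_entropy k \<sigma>"
  proof (rule sv_entropy_ge_of_indicator_matrix[OF svd finite_tidx[OF finJ] finite_tidx _ V _ \<beta>])
    show "\<forall>r\<in>tidx D J. card {c\<in>tidx D ({1..M} - J). paired r c}
        = (if r \<in> V then card {c\<in>tidx D ({1..M} - J). paired z c} else 0)"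
    proof
      fix r assume r: "r \<in> tidx D J"
      show "card {c\<in>tidx D ({1..M} - J). paired r c}
          = (if r \<in> V then card {c\<in>tidx D ({1..M} - J). paired z c} else 0)"
      proof (cases "r \<in> V")
        case False
        then have E: "{c\<in>tidx D ({1..M} - J). paired r c} = {}"
          using paired_row_small[OF r] unfolding V_def by blast
        show ?thesis using False unfolding E by simp
      next
        case True
        show ?thesis unfolding if_P[OF True]
          by (rule card_paired_columns) (use True zV in \<open>simp_all add: V_def\<close>)
      qed
    qed
    show "\<forall>c\<in>tidx D ({1..M} - J). card {r\<in>tidx D J. paired r c} \<le> 1"
    proof
      fix c
      have fin: "finite {r\<in>tidx D J. paired r c}" using finite_tidx[OF finJ] by simp
      have "card {r\<in>tidx D J. paired r c} \<le> Suc 0"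
        unfolding card_le_Suc0_iff_eq[OF fin] using paired_row_unique by blast
      then show "card {r\<in>tidx D J. paired r c} \<le> 1" by simp
    qed
    show "\<forall>r\<in>tidx D J. \<forall>c\<in>tidx D ({1..M} - J).
        matricize (paired_tensor M \<pi> d) J r c = (if paired r c then 1 else 0)"
      by (simp add: matricize_paired_tensor)
    show "V \<noteq> {}" using zV by blast
  qed simp
  moreover have "card V = d ^ card J" unfolding V_def using card_tidx[OF finJ] by simp
  ultimately show ?thesis using d_pos by (simp add: ln_realpow)
qed

end

definition partner_axis :: "nat \<Rightarrow> nat \<Rightarrow> nat" where
  "partner_axis M x = (if x \<le> M div 2 then x + M div 2 else x - M div 2)"

lemma partner_axis_props:
  assumes "even M" "x \<in> {1..M}"
  shows "partner_axis M x \<in> {1..M}" "partner_axis M (partner_axis M x) = x"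
    "(partner_axis M x - 1) div (M div 2) \<noteq> (x - 1) div (M div 2)"
  using assms by (auto simp: partner_axis_def div_eq_0_iff elim!: evenE)

lemma partner_axis_not_in_block:
  assumes P: "P > 0" and j: "j < L" and m: "m \<ge> 1"
    and JM: "axis_block P j m \<subseteq> {1..(2^L)^P}"
  shows "\<forall>x\<in>axis_block P j m. partner_axis ((2^L)^P) x \<notin> axis_block P j m"
proof (intro ballI notI)
  fix x assume x: "x \<in> axis_block P j m" and px: "partner_axis ((2^L)^P) x \<in> axis_block P j m"
  have "P * L = Suc (P * L - 1)" using P j by (simp add: Suc_le_eq)
  then have "((2::nat)^L)^P = 2 * 2^(P * L - 1)" by (metis power_Suc power_mult mult.commute)
  then have half: "((2::nat)^L)^P div 2 = 2^(P * L - 1)" and even: "even (((2::nat)^L)^P)" by simp_all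
  have "P * j < P * L" using P j by simp
  then have "P * j \<le> P * L - 1" by linarith
  then have "(partner_axis ((2^L)^P) x - 1) div 2^(P * L - 1) = (x - 1) div 2^(P * L - 1)"
    by (rule axis_block_same_div[OF _ m px x])
  moreover have "(partner_axis ((2^L)^P) x - 1) div (((2::nat)^L)^P div 2) \<noteq> (x - 1) div (((2::nat)^L)^P div 2)"
    using partner_axis_props(3)[OF even] x JM by blast
  ultimately show False unfolding half by simp
qed

lemma QE_paired_tensor_lower_bound:
  assumes P: "P > 0" and L: "L > 0" and Dp: "\<forall>n\<in>{1..(2^L)^P}. D n > 0"
    and comp: "compatible P L \<mu>" and l: "l \<le> L" and n: "n \<in> PiE {1..P} (\<lambda>_. {1..2^l})"
  defines "M \<equiv> (2^L)^P" and "d \<equiv> Min (D ` {1..(2^L)^P})"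
  shows "real (min (card (canon_K P L l n)) (card (cube (2^L) P - canon_K P L l n))) * ln (real d)
           \<le> QE D M (paired_tensor M (partner_axis M) d) (\<mu> ` canon_K P L l n)"
proof -
  obtain m where m: "m \<in> {1..2^(P*l)}" and J: "\<mu> ` canon_K P L l n = axis_block P (L - l) m"
    and JM: "axis_block P (L - l) m \<subseteq> {1..M}"
    using canon_K_image_axis_block[OF P comp l n] unfolding M_def by blast
  have finJ: "finite (\<mu> ` canon_K P L l n)" using JM J finite_subset by fastforce
  have "d \<in> D ` {1..M}" unfolding d_def M_def by (intro Min_in) auto
  then have d1: "d \<ge> 1" using Dp unfolding M_def by auto
  have dD: "\<forall>x\<in>{1..M}. d \<le> D x" unfolding d_def M_def by simp
  show ?thesis
  proof (cases "l = 0")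
    case True
    then have "canon_K P L l n = cube (2^L) P"
      unfolding canon_K_def cube_def using n by (intro PiE_cong) (auto simp: PiE_def Pi_def)
    then show ?thesis using QE_nonneg[OF finJ] by simp
  next
    case False
    have "even M" using P L by (simp add: M_def)
    then interpret axis_pairing M "partner_axis M" "\<mu> ` canon_K P L l n" d D
      using partner_axis_props partner_axis_not_in_block[OF P _ _ JM[unfolded M_def]] False m l J JM d1 dD
      by unfold_locales (auto simp: M_def)
    have "real (card (\<mu> ` canon_K P L l n)) * ln (real d)
        \<le> QE D M (paired_tensor M (partner_axis M) d) (\<mu> ` canon_K P L l n)"
      using QE_svd[OF finJ] sv_entropy_ge by metis
    moreover have "card (\<mu> ` canon_K P L l n) = card (canon_K P L l n)"
      using comp canon_K_subset_cube[OF l n]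
      by (intro card_image) (auto simp: compatible_def bij_betw_def intro: inj_on_subset)
    ultimately show ?thesis using d1
      by (smt (verit) ln_ge_zero min.cobounded1 mult_right_mono of_nat_1 of_nat_le_iff)
  qed
qed

theorem theorem3:
  fixes P L R :: nat and D :: "nat \<Rightarrow> nat" and W :: "(nat \<Rightarrow> nat) \<Rightarrow> real"
    and \<mu> :: "(nat \<Rightarrow> nat) \<Rightarrow> nat"
  assumes "P > 0" and "L > 0" and "\<forall>n\<in>{1..(2^L)^P}. D n > 0" and "R > 0"
    and "tn_generated P L R D W"
    and "compatible P L \<mu>"
  shows "(\<forall>A \<epsilon>. 0 \<le> \<epsilon> \<and> \<epsilon> \<le> fnorm D ((2^L)^P) A / 4 \<and>
             fnorm D ((2^L)^P) (\<lambda>i. W i - A i) \<le> \<epsilon> \<longrightarrow>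
           (\<forall>l\<in>{0..L}. \<forall>n\<in>PiE {1..P} (\<lambda>_. {1..2^l}).
              QE D ((2^L)^P) A (\<mu> ` canon_K P L l n)
                \<le> ln (real R)
                  + 2 * \<epsilon> / fnorm D ((2^L)^P) A * ln (real (DJ D ((2^L)^P) (\<mu> ` canon_K P L l n)))
                  + 2 * sqrt (2 * \<epsilon> / fnorm D ((2^L)^P) A)))
       \<and> (\<exists>A'. \<forall>l\<in>{0..L}. \<forall>n\<in>PiE {1..P} (\<lambda>_. {1..2^l}).
              QE D ((2^L)^P) A' (\<mu> ` canon_K P L l n)
                \<ge> real (min (card (canon_K P L l n)) (card (cube (2^L) P - canon_K P L l n)))
                  * ln (real (Min (D ` {1..(2^L)^P}))))"
  using QE_canonical_upper_bound[OF assms(1,4,5,6)] QE_paired_tensor_lower_bound[OF assms(1,2,3,6)]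
  by (intro conjI allI impI ballI
      exI[of _ "paired_tensor ((2^L)^P) (partner_axis ((2^L)^P)) (Min (D ` {1..(2^L)^P}))"]) auto

end
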